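(* Let $X$, $Y$ be disjoint sets of cardinality at least two, let $T$ be the $(|X|,|Y|)$-biregular tree, let $M \le \mathrm{Sym}(X)$ and $N \le \mathrm{Sym}(Y)$ be permutation groups, and let $c$ be a legal colouring of $X$ and $Y$. Then: (1) a subset $\Delta \subseteq X \cup Y$ is an orbit of $M$ or of $N$ if and only if $t(c^{-1}(\Delta)) = \{t(a) : a \in AT,\ c(a) \in \Delta\}$ is an orbit of $U_c(M,N)$ on $VT$; (2) for any two legal colourings $c, c'$ of $X$ and $Y$, the groups $U_c(M,N)$ and $U_{c'}(M,N)$ are conjugate in $\mathrm{Aut}(T)$; (3) if $M$ and $N$ are transitive and $H \le \mathrm{Aut}(T)$ is locally-$(M,N)$, then $H \le U_{c''}(M,N)$ for some legal colouring $c''$; (4) $U_c(M,N)$ is locally-$(M,N)$; (5) if $M$ and $N$ are closed (in the permutation topologies of $\mathrm{Sym}(X)$ and $\mathrm{Sym}(Y)$), then $U_c(M,N)$ is a closed subgroup of $\mathrm{Aut}(T)$.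
   Context: Permutations act on the left. $T$ has natural bipartition $VT = V_X\sqcup V_Y$ with vertices of $V_X$ of valency $|X|$ and vertices of $V_Y$ of valency $|Y|$. An arc is an ordered pair of adjacent vertices $a=(o(a),t(a))$; $AT$ is the set of arcs, $A(v)$ the arcs with origin $v$, $\overline{A}(v)$ the arcs with terminus $v$, $B(v)$ the set of neighbours of $v$. A legal colouring of $X$ and $Y$ is a map $c: AT\to X\cup Y$ such that $c|_{A(v)}:A(v)\to X$ is a bijection for $v\in V_X$, $c|_{A(v)}:A(v)\to Y$ is a bijection for $v\in V_Y$, and $c|_{\overline{A}(v)}$ is constant for each $v\in VT$. $U_c(M,N)$ is the group of all $g\in\mathrm{Aut}(T)$ with $gV_X=V_X$ such that $c|_{A(gv)}\circ g|_{A(v)}\circ (c|_{A(v)})^{-1}\in M$ for all $v\in V_X$ and $\in N$ for all $v\in V_Y$. A subgroup $H\le \mathrm{Aut}(T)$ is locally-$(M,N)$ if $H$ fixes $V_X$ and $V_Y$ setwise and, for every vertex $v$, the permutation group induced on $B(v)$ by the stabiliser $H_v$ is permutation isomorphic to $M$ if $v\in V_X$ and to $N$ if $v\in V_Y$. The permutation topology on a group of permutations of a set $V$ is the topology of pointwise convergence, with basic neighbourhoods of the identity the pointwise stabilisers of finite subsets of $V$; $\mathrm{Aut}(T)$ carries this topology as a group of permutations of $VT$. *)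

theory Defs
  imports "HOL-Analysis.Analysis" "HOL-Combinatorics.Permutations" "HOL-Library.Equipollence"
begin

text \<open>Graphs are given by an adjacency relation E on the vertex type 'v; the vertex set is UNIV.\<close>

definition is_path :: "('v \<Rightarrow> 'v \<Rightarrow> bool) \<Rightarrow> 'v list \<Rightarrow> bool" where
  "is_path E p \<longleftrightarrow> p \<noteq> [] \<and> distinct p \<and> (\<forall>i. Suc i < length p \<longrightarrow> E (p ! i) (p ! Suc i))"

definition is_tree :: "('v \<Rightarrow> 'v \<Rightarrow> bool) \<Rightarrow> bool" where
  "is_tree E \<longleftrightarrow> (\<forall>u v. \<not> E u u \<and> (E u v \<longrightarrow> E v u))
      \<and> (\<forall>u v. \<exists>!p. is_path E p \<and> hd p = u \<and> last p = v)"

definition nbrs :: "('v \<Rightarrow> 'v \<Rightarrow> bool) \<Rightarrow> 'v \<Rightarrow> 'v set" where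
  "nbrs E v = {u. E v u}"

definition biregular_tree ::
  "('v \<Rightarrow> 'v \<Rightarrow> bool) \<Rightarrow> 'v set \<Rightarrow> 'v set \<Rightarrow> 'c set \<Rightarrow> 'c set \<Rightarrow> bool" where
  "biregular_tree E VX VY X Y \<longleftrightarrow> is_tree E \<and> VX \<inter> VY = {} \<and> VX \<union> VY = UNIV
     \<and> (\<forall>u v. E u v \<longrightarrow> (u \<in> VX \<longleftrightarrow> v \<in> VY))
     \<and> (\<forall>v\<in>VX. nbrs E v \<approx> X) \<and> (\<forall>v\<in>VY. nbrs E v \<approx> Y)"

definition arcs :: "('v \<Rightarrow> 'v \<Rightarrow> bool) \<Rightarrow> ('v \<times> 'v) set" where
  "arcs E = {(u, v). E u v}"

definition out_arcs :: "('v \<Rightarrow> 'v \<Rightarrow> bool) \<Rightarrow> 'v \<Rightarrow> ('v \<times> 'v) set" where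
  "out_arcs E v = {a \<in> arcs E. fst a = v}"

definition in_arcs :: "('v \<Rightarrow> 'v \<Rightarrow> bool) \<Rightarrow> 'v \<Rightarrow> ('v \<times> 'v) set" where
  "in_arcs E v = {a \<in> arcs E. snd a = v}"

definition legal_colouring ::
  "('v \<Rightarrow> 'v \<Rightarrow> bool) \<Rightarrow> 'v set \<Rightarrow> 'v set \<Rightarrow> 'c set \<Rightarrow> 'c set \<Rightarrow> ('v \<times> 'v \<Rightarrow> 'c) \<Rightarrow> bool" where
  "legal_colouring E VX VY X Y c \<longleftrightarrow>
     (\<forall>v\<in>VX. bij_betw c (out_arcs E v) X) \<and> (\<forall>v\<in>VY. bij_betw c (out_arcs E v) Y)
     \<and> (\<forall>v. \<forall>a\<in>in_arcs E v. \<forall>b\<in>in_arcs E v. c a = c b)"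

text \<open>Sym(\<Omega>), realised as the permutations of the ambient type fixing everything outside \<Omega>.\<close>
definition Sym :: "'a set \<Rightarrow> ('a \<Rightarrow> 'a) set" where
  "Sym \<Omega> = {p. p permutes \<Omega>}"

definition perm_group :: "'a set \<Rightarrow> ('a \<Rightarrow> 'a) set \<Rightarrow> bool" where
  "perm_group \<Omega> G \<longleftrightarrow> G \<subseteq> Sym \<Omega> \<and> id \<in> G \<and> (\<forall>p\<in>G. \<forall>q\<in>G. p \<circ> q \<in> G) \<and> (\<forall>p\<in>G. inv p \<in> G)"

definition orbit :: "('a \<Rightarrow> 'a) set \<Rightarrow> 'a \<Rightarrow> 'a set" where
  "orbit G x = (\<lambda>g. g x) ` G"

definition is_orbit :: "'a set \<Rightarrow> ('a \<Rightarrow> 'a) set \<Rightarrow> 'a set \<Rightarrow> bool" where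
  "is_orbit \<Omega> G D \<longleftrightarrow> (\<exists>x\<in>\<Omega>. D = orbit G x)"

definition transitive_on :: "'a set \<Rightarrow> ('a \<Rightarrow> 'a) set \<Rightarrow> bool" where
  "transitive_on \<Omega> G \<longleftrightarrow> (\<forall>x\<in>\<Omega>. \<forall>y\<in>\<Omega>. \<exists>g\<in>G. g x = y)"

text \<open>Permutation topology (pointwise convergence) on a set S of permutations of \<Omega>:
  the basic neighbourhoods of f are the translates f \<circ> (pointwise stabiliser of a finite F),
  i.e. the sets of g agreeing with f on F.\<close>
definition perm_topology :: "'a set \<Rightarrow> ('a \<Rightarrow> 'a) set \<Rightarrow> ('a \<Rightarrow> 'a) topology" where
  "perm_topology \<Omega> S = topology (\<lambda>U. U \<subseteq> S \<and>
     (\<forall>f\<in>U. \<exists>F. finite F \<and> F \<subseteq> \<Omega> \<and> {g\<in>S. \<forall>x\<in>F. g x = f x} \<subseteq> U))"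

definition Aut :: "('v \<Rightarrow> 'v \<Rightarrow> bool) \<Rightarrow> ('v \<Rightarrow> 'v) set" where
  "Aut E = {g. bij g \<and> (\<forall>u v. E u v \<longleftrightarrow> E (g u) (g v))}"

text \<open>The permutation c|A(gv) \<circ> g|A(v) \<circ> (c|A(v))^{-1} of Z (extended by the identity off Z).\<close>
definition local_action ::
  "('v \<Rightarrow> 'v \<Rightarrow> bool) \<Rightarrow> ('v \<times> 'v \<Rightarrow> 'c) \<Rightarrow> ('v \<Rightarrow> 'v) \<Rightarrow> 'v \<Rightarrow> 'c set \<Rightarrow> 'c \<Rightarrow> 'c" where
  "local_action E c g v Z = (\<lambda>x. if x \<in> Z then c (map_prod g g (the_inv_into (out_arcs E v) c x)) else x)"

definition U_c ::
  "('v \<Rightarrow> 'v \<Rightarrow> bool) \<Rightarrow> 'v set \<Rightarrow> 'v set \<Rightarrow> 'c set \<Rightarrow> 'c set \<Rightarrow> ('v \<times> 'v \<Rightarrow> 'c)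
     \<Rightarrow> ('c \<Rightarrow> 'c) set \<Rightarrow> ('c \<Rightarrow> 'c) set \<Rightarrow> ('v \<Rightarrow> 'v) set" where
  "U_c E VX VY X Y c M N = {g \<in> Aut E. g ` VX = VX
      \<and> (\<forall>v\<in>VX. local_action E c g v X \<in> M) \<and> (\<forall>v\<in>VY. local_action E c g v Y \<in> N)}"

text \<open>The permutation group induced on B(v) by H_v is permutation isomorphic to K \<le> Sym(Z):
  there is a bijection \<phi> : B(v) \<rightarrow> Z transporting the induced group onto K.\<close>
definition induced_perm_iso ::
  "('v \<Rightarrow> 'v \<Rightarrow> bool) \<Rightarrow> ('v \<Rightarrow> 'v) set \<Rightarrow> 'v \<Rightarrow> 'c set \<Rightarrow> ('c \<Rightarrow> 'c) set \<Rightarrow> bool" where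
  "induced_perm_iso E H v Z K \<longleftrightarrow> (\<exists>\<phi>. bij_betw \<phi> (nbrs E v) Z \<and>
      (\<lambda>h. (\<lambda>x. if x \<in> Z then \<phi> (h (the_inv_into (nbrs E v) \<phi> x)) else x)) ` {h \<in> H. h v = v} = K)"

definition locally_MN ::
  "('v \<Rightarrow> 'v \<Rightarrow> bool) \<Rightarrow> 'v set \<Rightarrow> 'v set \<Rightarrow> 'c set \<Rightarrow> 'c set
     \<Rightarrow> ('c \<Rightarrow> 'c) set \<Rightarrow> ('c \<Rightarrow> 'c) set \<Rightarrow> ('v \<Rightarrow> 'v) set \<Rightarrow> bool" where
  "locally_MN E VX VY X Y M N H \<longleftrightarrow> H \<subseteq> Aut E \<and> perm_group UNIV H
      \<and> (\<forall>g\<in>H. g ` VX = VX \<and> g ` VY = VY)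
      \<and> (\<forall>v\<in>VX. induced_perm_iso E H v X M) \<and> (\<forall>v\<in>VY. induced_perm_iso E H v Y N)"

end

theory Submission
  imports Defs
begin

text \<open>
  A legal colouring is the same thing as a labelling of the vertices (the common colour of the
  arcs entering a vertex) that maps the neighbours of every vertex bijectively onto X or Y.
  Given two such labellings and a permutation of X \<union> Y preserving X and Y, an automorphism
  intertwining them is built outward from a root along the unique paths of the tree. Applied
  to elements of M and N this yields elements of U_c(M,N) with prescribed local actions, which
  gives the orbits (1) and the local structure (4); applied to the identity it conjugates
  U_c(M,N) into U_c'(M,N) (2). For (3), orbit representatives of H together with the local
  isomorphisms give identifications of all neighbourhoods with X or Y that are H-equivariant
  up to elements of M and N; transitivity of M and N then lets one glue them, again outward
  from a root, into a labelling whose colouring c'' has H \<le> U_c''(M,N). Closedness (5) holds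
  because violating the local condition at a vertex is witnessed on finitely many neighbours.
\<close>

lemma is_path_nonempty: "is_path E p \<Longrightarrow> p \<noteq> []"
  unfolding is_path_def by auto

lemma is_path_singleton: "is_path E [v]"
  unfolding is_path_def by auto

lemma is_path_pair: "E u v \<Longrightarrow> u \<noteq> v \<Longrightarrow> is_path E [u, v]"
  unfolding is_path_def by (auto simp: less_Suc_eq nth_Cons split: nat.splits)

lemma is_path_snoc:
  assumes "is_path E p" "E (last p) w" "w \<notin> set p"
  shows "is_path E (p @ [w])"
  unfolding is_path_def
proof (intro conjI allI impI)
  show "p @ [w] \<noteq> []" by simp
  show "distinct (p @ [w])" using assms unfolding is_path_def by auto
  fix i assume i: "Suc i < length (p @ [w])"
  show "E ((p @ [w]) ! i) ((p @ [w]) ! Suc i)"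
  proof (cases "Suc i < length p")
    case True
    then show ?thesis using assms(1) unfolding is_path_def by (auto simp: nth_append)
  next
    case False
    then have "i = length p - 1" "Suc i = length p" using i by simp_all
    then show ?thesis
      using assms(2) is_path_nonempty[OF assms(1)] by (auto simp: nth_append last_conv_nth)
  qed
qed

lemma is_path_butlast:
  assumes "is_path E p" "2 \<le> length p"
  shows "is_path E (butlast p)" "E (last (butlast p)) (last p)"
proof -
  have ne: "butlast p \<noteq> []" using assms(2) by (cases p) auto
  then show "is_path E (butlast p)" using assms unfolding is_path_def
    by (auto simp: nth_butlast distinct_butlast)
  have "E (p ! (length p - 2)) (p ! Suc (length p - 2))"
    using assms unfolding is_path_def by simp
  moreover have "Suc (length p - 2) = length p - 1" using assms by simp
  moreover have "last (butlast p) = p ! (length p - 2)"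
    using ne assms(2) by (simp add: last_conv_nth nth_butlast numeral_2_eq_2)
  ultimately show "E (last (butlast p)) (last p)"
    using is_path_nonempty[OF assms(1)] by (simp add: last_conv_nth)
qed

lemma is_path_drop: "is_path E p \<Longrightarrow> k < length p \<Longrightarrow> is_path E (drop k p)"
  unfolding is_path_def by auto

lemma AutD: "g \<in> Aut E \<Longrightarrow> bij g" "g \<in> Aut E \<Longrightarrow> E u v \<longleftrightarrow> E (g u) (g v)"
  unfolding Aut_def by auto

lemma Aut_id: "id \<in> Aut E"
  unfolding Aut_def by auto

lemma Aut_comp: "g \<in> Aut E \<Longrightarrow> h \<in> Aut E \<Longrightarrow> g \<circ> h \<in> Aut E"
  unfolding Aut_def by (auto intro: bij_comp)

lemma Aut_inv:
  assumes "g \<in> Aut E"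
  shows "inv g \<in> Aut E"
proof -
  have b: "bij g" using AutD(1)[OF assms] .
  have "E u v \<longleftrightarrow> E (inv g u) (inv g v)" for u v
    using AutD(2)[OF assms, of "inv g u" "inv g v"] b by (simp add: bij_is_surj surj_f_inv_f)
  then show ?thesis using b unfolding Aut_def by (auto simp: bij_imp_bij_inv)
qed

lemma Aut_nbrs:
  assumes "g \<in> Aut E"
  shows "bij_betw g (nbrs E w) (nbrs E (g w))"
proof -
  have b: "bij g" using AutD(1)[OF assms] .
  have "nbrs E (g w) \<subseteq> g ` nbrs E w"
  proof
    fix u assume "u \<in> nbrs E (g w)"
    moreover have "g (inv g u) = u" using b by (simp add: bij_is_surj surj_f_inv_f)
    ultimately have "E (g w) (g (inv g u))" unfolding nbrs_def by simp
    then have "inv g u \<in> nbrs E w" using AutD(2)[OF assms] unfolding nbrs_def by simp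
    then show "u \<in> g ` nbrs E w" using \<open>g (inv g u) = u\<close> by force
  qed
  moreover have "g ` nbrs E w \<subseteq> nbrs E (g w)" using AutD(2)[OF assms] unfolding nbrs_def by auto
  ultimately show ?thesis using b bij_is_inj inj_on_subset unfolding bij_betw_def by blast
qed

lemma perm_groupD:
  assumes "perm_group S G"
  shows "id \<in> G" "p \<in> G \<Longrightarrow> q \<in> G \<Longrightarrow> p \<circ> q \<in> G" "p \<in> G \<Longrightarrow> inv p \<in> G"
    "p \<in> G \<Longrightarrow> p permutes S"
  using assms unfolding perm_group_def Sym_def by auto

lemma orbit_self:
  assumes "perm_group S G"
  shows "x \<in> orbit G x"
proof -
  have "id x \<in> (\<lambda>g. g x) ` G" using perm_groupD(1)[OF assms] by (rule imageI)
  then show ?thesis unfolding orbit_def by simp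
qed

lemma orbit_subset:
  assumes "perm_group S G" "x \<in> S"
  shows "orbit G x \<subseteq> S"
  unfolding orbit_def using perm_groupD(4)[OF assms(1)] assms(2) by (auto simp: permutes_in_image)

lemma orbit_eq:
  assumes G: "perm_group S G" and g: "g \<in> G"
  shows "orbit G (g x) = orbit G x"
proof
  show "orbit G (g x) \<subseteq> orbit G x"
  proof
    fix y assume "y \<in> orbit G (g x)"
    then obtain h where "h \<in> G" "y = (h \<circ> g) x" unfolding orbit_def by auto
    then show "y \<in> orbit G x" unfolding orbit_def using perm_groupD(2)[OF G _ g] by blast
  qed
  have ginv: "inv g (g x) = x" using perm_groupD(4)[OF G g] by (simp add: permutes_inverses(2))
  show "orbit G x \<subseteq> orbit G (g x)"
  proof
    fix y assume "y \<in> orbit G x"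
    then obtain h where h: "h \<in> G" "y = h x" unfolding orbit_def by auto
    then have "y = (h \<circ> inv g) (g x)" using ginv by simp
    moreover have "h \<circ> inv g \<in> G" using perm_groupD(2,3)[OF G] g h(1) by blast
    ultimately show "y \<in> orbit G (g x)" unfolding orbit_def by blast
  qed
qed

lemma istopology_perm_topology:
  "istopology (\<lambda>U. U \<subseteq> S \<and> (\<forall>f\<in>U. \<exists>F. finite F \<and> F \<subseteq> \<Omega> \<and> {g\<in>S. \<forall>x\<in>F. g x = f x} \<subseteq> U))"
  (is "istopology ?open")
  unfolding istopology_def
proof (rule conjI; intro allI impI)
  fix A B assume A: "?open A" and B: "?open B"
  have "\<exists>F. finite F \<and> F \<subseteq> \<Omega> \<and> {g\<in>S. \<forall>x\<in>F. g x = f x} \<subseteq> A \<inter> B" if f: "f \<in> A \<inter> B" for f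
  proof -
    obtain F1 where "finite F1 \<and> F1 \<subseteq> \<Omega> \<and> {g\<in>S. \<forall>x\<in>F1. g x = f x} \<subseteq> A"
      using bspec[OF conjunct2[OF A] IntD1[OF f]] ..
    moreover obtain F2 where "finite F2 \<and> F2 \<subseteq> \<Omega> \<and> {g\<in>S. \<forall>x\<in>F2. g x = f x} \<subseteq> B"
      using bspec[OF conjunct2[OF B] IntD2[OF f]] ..
    ultimately show ?thesis by (intro exI[of _ "F1 \<union> F2"]) auto
  qed
  then show "?open (A \<inter> B)" using A by blast
next
  fix K assume K: "\<forall>U\<in>K. ?open U"
  show "?open (\<Union>K)"
  proof (intro conjI ballI)
    show "\<Union>K \<subseteq> S" using K by blast
    fix f assume "f \<in> \<Union>K"
    then obtain U where U: "U \<in> K" "f \<in> U" by blast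
    obtain F where F: "finite F \<and> F \<subseteq> \<Omega> \<and> {g\<in>S. \<forall>x\<in>F. g x = f x} \<subseteq> U"
      using bspec[OF conjunct2[OF bspec[OF K U(1)]] U(2)] ..
    have "{g\<in>S. \<forall>x\<in>F. g x = f x} \<subseteq> \<Union>K"
      using conjunct2[OF conjunct2[OF F]] Union_upper[OF U(1)] by (rule subset_trans)
    then show "\<exists>F. finite F \<and> F \<subseteq> \<Omega> \<and> {g\<in>S. \<forall>x\<in>F. g x = f x} \<subseteq> \<Union>K"
      using F by (intro exI[of _ F]) simp
  qed
qed

lemma openin_perm_topology:
  "openin (perm_topology \<Omega> S) U \<longleftrightarrow>
     U \<subseteq> S \<and> (\<forall>f\<in>U. \<exists>F. finite F \<and> F \<subseteq> \<Omega> \<and> {g\<in>S. \<forall>x\<in>F. g x = f x} \<subseteq> U)"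
  unfolding perm_topology_def topology_inverse'[OF istopology_perm_topology] ..

lemma topspace_perm_topology: "topspace (perm_topology \<Omega> S) = S"
proof -
  have "openin (perm_topology \<Omega> S) S" unfolding openin_perm_topology by auto
  moreover have "U \<subseteq> S" if "openin (perm_topology \<Omega> S) U" for U
    using that unfolding openin_perm_topology by blast
  ultimately show ?thesis unfolding topspace_def by blast
qed

lemma closedin_perm_topology:
  "closedin (perm_topology \<Omega> S) C \<longleftrightarrow> C \<subseteq> S \<and>
     (\<forall>f\<in>S - C. \<exists>F. finite F \<and> F \<subseteq> \<Omega> \<and> {g\<in>S. \<forall>x\<in>F. g x = f x} \<inter> C = {})"
proof -
  have "{g\<in>S. P g} \<subseteq> S - C \<longleftrightarrow> {g\<in>S. P g} \<inter> C = {}" for P by blast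
  then have "openin (perm_topology \<Omega> S) (S - C) \<longleftrightarrow>
     (\<forall>f\<in>S - C. \<exists>F. finite F \<and> F \<subseteq> \<Omega> \<and> {g\<in>S. \<forall>x\<in>F. g x = f x} \<inter> C = {})"
    unfolding openin_perm_topology by simp
  then show ?thesis unfolding closedin_def topspace_perm_topology by blast
qed

lemma permutes_disjoint_comp:
  assumes m: "m permutes A" and n: "n permutes B" and AB: "A \<inter> B = {}"
  shows "(m \<circ> n) ` A = A" "(m \<circ> n) ` B = B"
    "x \<in> A \<Longrightarrow> (m \<circ> n) x = m x" "y \<in> B \<Longrightarrow> (m \<circ> n) y = n y"
proof -
  have n_A: "n x = x" if "x \<in> A" for x using n that AB by (meson disjoint_iff permutes_not_in)
  have m_B: "m y = y" if "y \<in> B" for y using m that AB by (meson disjoint_iff permutes_not_in)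
  have "n ` A = A" "m ` B = B" using n_A m_B by auto
  then show "(m \<circ> n) ` A = A" "(m \<circ> n) ` B = B"
    using permutes_image[OF m] permutes_image[OF n] by (metis image_comp)+
  show "x \<in> A \<Longrightarrow> (m \<circ> n) x = m x" using n_A by simp
  show "y \<in> B \<Longrightarrow> (m \<circ> n) y = n y" using m_B permutes_in_image[OF n] by simp
qed

locale tree =
  fixes E :: "'v \<Rightarrow> 'v \<Rightarrow> bool"
  assumes is_tree: "is_tree E"
begin

lemma not_adj_self: "\<not> E u u"
  using is_tree unfolding is_tree_def by blast

lemma adj_sym: "E u v \<Longrightarrow> E v u"
  using is_tree unfolding is_tree_def by blast

lemma ex1_path: "\<exists>!p. is_path E p \<and> hd p = u \<and> last p = v"
  using is_tree unfolding is_tree_def by blast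

definition tree_path :: "'v \<Rightarrow> 'v \<Rightarrow> 'v list" where
  "tree_path u v = (THE p. is_path E p \<and> hd p = u \<and> last p = v)"

lemma tree_path: "is_path E (tree_path u v)" "hd (tree_path u v) = u" "last (tree_path u v) = v"
  using theI'[OF ex1_path[of u v]] unfolding tree_path_def by auto

lemma tree_path_unique: "is_path E p \<Longrightarrow> hd p = u \<Longrightarrow> last p = v \<Longrightarrow> tree_path u v = p"
  using ex1_path[of u v] tree_path[of u v] by blast

lemma tree_path_self: "tree_path v v = [v]"
  by (rule tree_path_unique[OF is_path_singleton]) auto

definition depth :: "'v \<Rightarrow> 'v \<Rightarrow> nat" where
  "depth r v = length (tree_path r v) - 1"

definition parent :: "'v \<Rightarrow> 'v \<Rightarrow> 'v" where
  "parent r v = last (butlast (tree_path r v))"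

lemma length_tree_path:
  assumes "v \<noteq> r"
  shows "2 \<le> length (tree_path r v)"
proof (rule ccontr)
  assume "\<not> ?thesis"
  then obtain a where "tree_path r v = [a]"
    using is_path_nonempty[OF tree_path(1)] by (cases "tree_path r v"; cases "tl (tree_path r v)") auto
  then show False using tree_path(2,3)[of r v] assms by simp
qed

lemma
  assumes "v \<noteq> r"
  shows parent_adj: "E (parent r v) v"
    and depth_parent: "depth r v = Suc (depth r (parent r v))"
proof -
  have L: "2 \<le> length (tree_path r v)" using length_tree_path[OF assms] .
  show "E (parent r v) v"
    using is_path_butlast[OF tree_path(1) L] tree_path(3) unfolding parent_def by simp
  have "hd (butlast (tree_path r v)) = r" using L tree_path(2)[of r v] by (cases "tree_path r v") auto
  then have "tree_path r (parent r v) = butlast (tree_path r v)"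
    unfolding parent_def by (intro tree_path_unique is_path_butlast[OF tree_path(1) L]) auto
  then show "depth r v = Suc (depth r (parent r v))" unfolding depth_def using L by simp
qed

lemma depth_root: "depth r r = 0"
  unfolding depth_def tree_path_self by simp

lemma tree_induct[case_names root step]:
  assumes "P r" "\<And>v. v \<noteq> r \<Longrightarrow> P (parent r v) \<Longrightarrow> P v"
  shows "P v"
proof (induction "depth r v" arbitrary: v rule: less_induct)
  case less
  show ?case
  proof (cases "v = r")
    case False
    then have "P (parent r v)" using less depth_parent[OF False] by simp
    then show ?thesis using assms(2) False by blast
  qed (use assms in simp)
qed

text \<open>Every edge joins a vertex to its parent: either the path to v extends the path to u,
  or v already lies on the path to u, and then uniqueness of paths forces it to be the last
  step.\<close>
lemma adj_parent_cases:
  assumes "E u v"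
  shows "(v \<noteq> r \<and> parent r v = u) \<or> (u \<noteq> r \<and> parent r u = v)"
proof (cases "v \<in> set (tree_path r u)")
  case False
  let ?p = "tree_path r u"
  have P: "is_path E (?p @ [v])" using is_path_snoc[OF tree_path(1)] assms False tree_path(3) by simp
  have "hd (?p @ [v]) = r" using tree_path(2) is_path_nonempty[OF tree_path(1)] by simp
  then have "tree_path r v = ?p @ [v]" by (intro tree_path_unique[OF P]) auto
  moreover have "v \<noteq> r" using False tree_path(2)[of r u] is_path_nonempty[OF tree_path(1)[of r u]]
    by (metis hd_in_set)
  ultimately show ?thesis unfolding parent_def using tree_path(3) by simp
next
  case True
  let ?p = "tree_path r u"
  obtain k where k: "k < length ?p" "?p ! k = v" using True by (auto simp: in_set_conv_nth)
  have "hd (drop k ?p) = v" "last (drop k ?p) = u"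
    using k tree_path(3)[of r u] by (simp_all add: hd_drop_conv_nth)
  then have "tree_path v u = drop k ?p" by (rule tree_path_unique[OF is_path_drop[OF tree_path(1) k(1)]])
  moreover have "tree_path v u = [v, u]"
  proof -
    have "v \<noteq> u" using assms not_adj_self by blast
    then show ?thesis using tree_path_unique[OF is_path_pair[of E, OF adj_sym[OF assms]]] by simp
  qed
  ultimately have "drop k ?p = [v, u]" by simp
  then have "length ?p - k = 2" using length_drop by (metis length_Cons list.size(3) numeral_2_eq_2)
  then have len: "length ?p = k + 2" using k(1) by linarith
  then have "u \<noteq> r" using tree_path_self by auto
  moreover have "parent r u = v"
  proof -
    have "length (butlast ?p) = Suc k" using len by simp
    then have "last (butlast ?p) = butlast ?p ! k"
      by (metis diff_Suc_1 last_conv_nth list.size(3) nat.distinct(1))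
    also have "\<dots> = v" using len k by (simp add: nth_butlast)
    finally show ?thesis unfolding parent_def .
  qed
  ultimately show ?thesis by simp
qed

primrec tree_rec_bounded :: "'v \<Rightarrow> 'a \<Rightarrow> ('v \<Rightarrow> 'a \<Rightarrow> 'a) \<Rightarrow> nat \<Rightarrow> 'v \<Rightarrow> 'a" where
  "tree_rec_bounded r b s 0 v = b"
| "tree_rec_bounded r b s (Suc n) v =
     (if v = r then b else s v (tree_rec_bounded r b s n (parent r v)))"

text \<open>Recursion outward from the root r along parent links; the depth is the fuel that makes the
  recursion well-founded.\<close>
definition tree_rec :: "'v \<Rightarrow> 'a \<Rightarrow> ('v \<Rightarrow> 'a \<Rightarrow> 'a) \<Rightarrow> 'v \<Rightarrow> 'a" where
  "tree_rec r b s v = tree_rec_bounded r b s (depth r v) v"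

lemma tree_rec_root: "tree_rec r b s r = b"
  unfolding tree_rec_def depth_root by simp

lemma tree_rec_step: "v \<noteq> r \<Longrightarrow> tree_rec r b s v = s v (tree_rec r b s (parent r v))"
  unfolding tree_rec_def using depth_parent by simp

end

locale biregular =
  fixes E :: "'v \<Rightarrow> 'v \<Rightarrow> bool" and VX VY :: "'v set" and X Y :: "'c set"
  assumes biregular: "biregular_tree E VX VY X Y"
    and colours_disjoint: "X \<inter> Y = {}" and X_nonempty: "X \<noteq> {}" and Y_nonempty: "Y \<noteq> {}"
begin

sublocale tree E
  using biregular unfolding biregular_tree_def by unfold_locales blast

lemma VY_eq: "VY = - VX"
  using biregular unfolding biregular_tree_def by blast

lemma adj_side: "E u v \<Longrightarrow> u \<in> VX \<longleftrightarrow> v \<notin> VX"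
  using biregular VY_eq unfolding biregular_tree_def by blast

definition colours :: "'v \<Rightarrow> 'c set" where
  "colours v = (if v \<in> VX then X else Y)"

definition local_group :: "('c \<Rightarrow> 'c) set \<Rightarrow> ('c \<Rightarrow> 'c) set \<Rightarrow> 'v \<Rightarrow> ('c \<Rightarrow> 'c) set" where
  "local_group M N v = (if v \<in> VX then M else N)"

lemma ex_adj: "\<exists>u. E v u"
proof -
  have "nbrs E v \<approx> colours v"
    using biregular VY_eq unfolding biregular_tree_def colours_def by auto
  moreover have "colours v \<noteq> {}" using X_nonempty Y_nonempty unfolding colours_def by auto
  ultimately have "nbrs E v \<noteq> {}" unfolding eqpoll_def bij_betw_def by auto
  then show ?thesis unfolding nbrs_def by auto
qed

lemma VX_nonempty: "\<exists>v. v \<in> VX"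
  using ex_adj adj_side by blast

text \<open>A legal colouring c is constant on the arcs entering a vertex, so it is determined by the
  labelling in_colour c; legal colourings correspond exactly to legal labellings.\<close>
definition legal_labelling :: "('v \<Rightarrow> 'c) \<Rightarrow> bool" where
  "legal_labelling l \<longleftrightarrow> (\<forall>v. bij_betw l (nbrs E v) (colours v))"

definition in_colour :: "('v \<times> 'v \<Rightarrow> 'c) \<Rightarrow> 'v \<Rightarrow> 'c" where
  "in_colour c v = c (SOME u. E u v, v)"

definition labelled_nbr :: "('v \<Rightarrow> 'c) \<Rightarrow> 'v \<Rightarrow> 'c \<Rightarrow> 'v" where
  "labelled_nbr l v x = (THE u. E v u \<and> l u = x)"

lemma legal_labelling_in_colours: "legal_labelling l \<Longrightarrow> E v u \<Longrightarrow> l u \<in> colours v"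
  unfolding legal_labelling_def bij_betw_def nbrs_def by blast

lemma legal_labelling_inj:
  "legal_labelling l \<Longrightarrow> E v u \<Longrightarrow> E v w \<Longrightarrow> l u = l w \<Longrightarrow> u = w"
  unfolding legal_labelling_def bij_betw_def nbrs_def inj_on_def by blast

lemma labelled_nbr:
  assumes "legal_labelling l" "x \<in> colours v"
  shows "E v (labelled_nbr l v x)" "l (labelled_nbr l v x) = x"
proof -
  have "\<exists>u. E v u \<and> l u = x"
    using assms unfolding legal_labelling_def bij_betw_def nbrs_def by force
  then have "\<exists>!u. E v u \<and> l u = x" using legal_labelling_inj[OF assms(1)] by blast
  from theI'[OF this] show "E v (labelled_nbr l v x)" "l (labelled_nbr l v x) = x"
    unfolding labelled_nbr_def by auto
qed

lemma labelled_nbr_label: "legal_labelling l \<Longrightarrow> E v u \<Longrightarrow> labelled_nbr l v (l u) = u"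
  using labelled_nbr legal_labelling_in_colours legal_labelling_inj by metis

lemma legal_labelling_side:
  assumes "legal_labelling l"
  shows "l v \<in> X \<longleftrightarrow> v \<notin> VX" "l v \<in> Y \<longleftrightarrow> v \<in> VX"
proof -
  obtain u where "E u v" using ex_adj adj_sym by blast
  then have "l v \<in> colours u" "u \<in> VX \<longleftrightarrow> v \<notin> VX"
    using legal_labelling_in_colours[OF assms] adj_side by auto
  then show "l v \<in> X \<longleftrightarrow> v \<notin> VX" "l v \<in> Y \<longleftrightarrow> v \<in> VX"
    using colours_disjoint unfolding colours_def by (auto split: if_splits)
qed

lemma legal_labelling_surj:
  assumes l: "legal_labelling l" and x: "x \<in> X \<union> Y"
  shows "\<exists>v. l v = x"
proof -
  obtain v u where "v \<in> VX" "E v u" using VX_nonempty ex_adj by blast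
  then have "x \<in> colours v \<or> x \<in> colours u" using x adj_side unfolding colours_def by auto
  then show ?thesis using labelled_nbr(2)[OF l] by blast
qed

lemma legal_labelling_preimage_inj:
  assumes l: "legal_labelling l" and "A \<subseteq> X \<union> Y" "B \<subseteq> X \<union> Y"
    and "{v. l v \<in> A} = {v. l v \<in> B}"
  shows "A = B"
  using assms legal_labelling_surj[OF l] by blast

lemma in_colour_eq:
  assumes c: "legal_colouring E VX VY X Y c" and "E u v"
  shows "c (u, v) = in_colour c v"
proof -
  have "E (SOME u. E u v) v" using assms(2) by (rule someI)
  then have "(SOME u. E u v, v) \<in> in_arcs E v" "(u, v) \<in> in_arcs E v"
    using assms(2) unfolding in_arcs_def arcs_def by auto
  then show ?thesis using c unfolding legal_colouring_def in_colour_def by metis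
qed

lemma legal_colouring_bij: "legal_colouring E VX VY X Y c \<Longrightarrow> bij_betw c (out_arcs E v) (colours v)"
  unfolding legal_colouring_def colours_def using VY_eq by auto

lemma out_arcs_eq: "out_arcs E v = Pair v ` nbrs E v"
  unfolding out_arcs_def arcs_def nbrs_def by auto

lemma legal_labelling_in_colour:
  assumes c: "legal_colouring E VX VY X Y c"
  shows "legal_labelling (in_colour c)"
  unfolding legal_labelling_def
proof
  fix v
  have "bij_betw (Pair v) (nbrs E v) (out_arcs E v)"
    unfolding out_arcs_eq by (simp add: bij_betw_imageI inj_on_def)
  then have "bij_betw (c \<circ> Pair v) (nbrs E v) (colours v)"
    by (rule bij_betw_trans[OF _ legal_colouring_bij[OF c]])
  moreover have "\<forall>u\<in>nbrs E v. (c \<circ> Pair v) u = in_colour c u"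
    using in_colour_eq[OF c] unfolding nbrs_def by auto
  ultimately show "bij_betw (in_colour c) (nbrs E v) (colours v)"
    using bij_betw_cong[of "nbrs E v" "c \<circ> Pair v" "in_colour c"] by simp
qed

lemma legal_colouring_of_labelling:
  assumes l: "legal_labelling l"
  shows "legal_colouring E VX VY X Y (\<lambda>a. l (snd a))"
proof -
  have "bij_betw (l \<circ> snd) (out_arcs E v) (colours v)" for v
  proof -
    have "bij_betw snd (out_arcs E v) (nbrs E v)"
      unfolding out_arcs_eq by (auto simp: bij_betw_def inj_on_def image_image)
    then show ?thesis using l unfolding legal_labelling_def by (blast intro: bij_betw_trans)
  qed
  then have "\<forall>v\<in>VX. bij_betw (l \<circ> snd) (out_arcs E v) X" "\<forall>v\<in>VY. bij_betw (l \<circ> snd) (out_arcs E v) Y"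
    unfolding colours_def VY_eq by (metis ComplD)+
  moreover have "\<forall>v. \<forall>a\<in>in_arcs E v. \<forall>b\<in>in_arcs E v. l (snd a) = l (snd b)"
    unfolding in_arcs_def by auto
  ultimately show ?thesis unfolding legal_colouring_def comp_def by blast
qed

lemma in_colour_of_labelling: "in_colour (\<lambda>a. l (snd a)) = l"
  unfolding in_colour_def by simp

lemma local_action_apply:
  assumes c: "legal_colouring E VX VY X Y c" and g: "g \<in> Aut E" and x: "x \<in> colours v"
  shows "local_action E c g v (colours v) x = in_colour c (g (labelled_nbr (in_colour c) v x))"
proof -
  let ?u = "labelled_nbr (in_colour c) v x"
  have e: "E v ?u" and "in_colour c ?u = x"
    using labelled_nbr[OF legal_labelling_in_colour[OF c] x] by auto
  then have "c (v, ?u) = x" using in_colour_eq[OF c e] by simp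
  moreover have "(v, ?u) \<in> out_arcs E v" using e unfolding out_arcs_def arcs_def by simp
  moreover have "inj_on c (out_arcs E v)" using legal_colouring_bij[OF c] bij_betw_def by blast
  ultimately have "the_inv_into (out_arcs E v) c x = (v, ?u)" by (intro the_inv_into_f_eq) auto
  moreover have "E (g v) (g ?u)" using AutD(2)[OF g] e by blast
  ultimately show ?thesis unfolding local_action_def using x in_colour_eq[OF c] by simp
qed

lemma local_action_outside: "x \<notin> Z \<Longrightarrow> local_action E c g v Z x = x"
  unfolding local_action_def by simp

lemma side_preserved: "g \<in> Aut E \<Longrightarrow> g ` VX = VX \<Longrightarrow> g v \<in> VX \<longleftrightarrow> v \<in> VX"
  using AutD(1) bij_is_inj by (metis inj_image_mem_iff)

lemma colours_preserved: "g \<in> Aut E \<Longrightarrow> g ` VX = VX \<Longrightarrow> colours (g v) = colours v"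
  using side_preserved unfolding colours_def by simp

lemma local_group_preserved: "g \<in> Aut E \<Longrightarrow> g ` VX = VX \<Longrightarrow> local_group M N (g v) = local_group M N v"
  using side_preserved unfolding local_group_def by simp

lemma inv_image_VX: "g \<in> Aut E \<Longrightarrow> g ` VX = VX \<Longrightarrow> inv g ` VX = VX"
  using AutD(1) bij_is_inj image_inv_f_f by metis

text \<open>The map is built outward from r: a child v of p goes to the neighbour of the image of p
  whose label is \<tau> (l1 v).\<close>
lemma transport_labelling_hom:
  assumes l1: "legal_labelling l1" and l2: "legal_labelling l2"
    and \<tau>X: "\<And>x. x \<in> X \<Longrightarrow> \<tau> x \<in> X" and \<tau>Y: "\<And>x. x \<in> Y \<Longrightarrow> \<tau> x \<in> Y"
    and side: "r \<in> VX \<longleftrightarrow> r' \<in> VX" and label: "l2 r' = \<tau> (l1 r)"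
  obtains g where "g r = r'" "\<And>v. v \<in> VX \<longleftrightarrow> g v \<in> VX" "\<And>v. l2 (g v) = \<tau> (l1 v)"
    "\<And>u v. E u v \<Longrightarrow> E (g u) (g v)"
proof -
  define g where "g = tree_rec r r' (\<lambda>v w. labelled_nbr l2 w (\<tau> (l1 v)))"
  have g_root: "g r = r'" unfolding g_def by (rule tree_rec_root)
  have g_step: "g v = labelled_nbr l2 (g (parent r v)) (\<tau> (l1 v))" if "v \<noteq> r" for v
    unfolding g_def using tree_rec_step[OF that] .
  have \<tau>_colours: "\<tau> x \<in> colours w" if "x \<in> colours w" for x w
    using that \<tau>X \<tau>Y unfolding colours_def by (auto split: if_splits)
  have invariant:
    "(v \<in> VX \<longleftrightarrow> g v \<in> VX) \<and> l2 (g v) = \<tau> (l1 v) \<and> (v \<noteq> r \<longrightarrow> E (g (parent r v)) (g v))" for v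
  proof (induction v rule: tree_induct[of _ r])
    case root
    then show ?case using side label g_root by simp
  next
    case (step v)
    let ?p = "parent r v"
    have e: "E ?p v" using parent_adj[OF step(1)] .
    have side_p: "?p \<in> VX \<longleftrightarrow> g ?p \<in> VX" using step(2) by simp
    then have "colours (g ?p) = colours ?p" unfolding colours_def by simp
    then have "\<tau> (l1 v) \<in> colours (g ?p)"
      using \<tau>_colours legal_labelling_in_colours[OF l1 e] by simp
    then have e': "E (g ?p) (g v)" and "l2 (g v) = \<tau> (l1 v)"
      using labelled_nbr[OF l2] g_step[OF step(1)] by auto
    moreover have "v \<in> VX \<longleftrightarrow> g v \<in> VX" using adj_side[OF e] adj_side[OF e'] side_p by argo
    ultimately show ?case by blast
  qed
  have hom: "E (g u) (g v)" if "E u v" for u v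
    using adj_parent_cases[OF that, of r] invariant adj_sym by metis
  show ?thesis
  proof (rule that)
    show "g r = r'" by (rule g_root)
  qed (use invariant hom in blast)+
qed

lemma transport_labelling_inverse:
  assumes l: "legal_labelling l"
    and hom_g: "\<And>u v. E u v \<Longrightarrow> E (g u) (g v)" and hom_h: "\<And>u v. E u v \<Longrightarrow> E (h u) (h v)"
    and root: "h (g r) = r" and label: "\<And>v. l (h (g v)) = l v"
  shows "h (g v) = v"
proof (induction v rule: tree_induct[of _ r])
  case (step v)
  have e: "E (parent r v) v" using parent_adj[OF step(1)] .
  then have "E (parent r v) (h (g v))" using hom_g hom_h step(2) by metis
  then show ?case using legal_labelling_inj[OF l _ e] label by simp
qed (rule root)

lemma transport_labelling:
  assumes l1: "legal_labelling l1" and l2: "legal_labelling l2"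
    and \<tau>: "bij \<tau>" "\<tau> ` X = X" "\<tau> ` Y = Y"
    and side: "r \<in> VX \<longleftrightarrow> r' \<in> VX" and label: "l2 r' = \<tau> (l1 r)"
  obtains g where "g \<in> Aut E" "g r = r'" "g ` VX = VX" "\<And>v. l2 (g v) = \<tau> (l1 v)"
proof -
  have \<tau>X: "\<tau> x \<in> X" if "x \<in> X" for x using that \<tau>(2) by blast
  have \<tau>Y: "\<tau> x \<in> Y" if "x \<in> Y" for x using that \<tau>(3) by blast
  obtain g where g: "g r = r'" "\<And>v. v \<in> VX \<longleftrightarrow> g v \<in> VX" "\<And>v. l2 (g v) = \<tau> (l1 v)"
    "\<And>u v. E u v \<Longrightarrow> E (g u) (g v)"
    using transport_labelling_hom[where \<tau> = \<tau>, OF l1 l2 \<tau>X \<tau>Y side label] by blast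
  have inv\<tau>: "inv \<tau> x \<in> X" if "x \<in> X" for x
    using that \<tau> by (metis bij_inv_eq_iff imageE)
  have inv\<tau>': "inv \<tau> x \<in> Y" if "x \<in> Y" for x
    using that \<tau> by (metis bij_inv_eq_iff imageE)
  have "l1 r = inv \<tau> (l2 r')" using label \<tau>(1) by (simp add: bij_inv_eq_iff)
  then obtain h where h: "h r' = r" "\<And>v. v \<in> VX \<longleftrightarrow> h v \<in> VX" "\<And>v. l1 (h v) = inv \<tau> (l2 v)"
    "\<And>u v. E u v \<Longrightarrow> E (h u) (h v)"
    using transport_labelling_hom[where \<tau> = "inv \<tau>", OF l2 l1 inv\<tau> inv\<tau>' side[symmetric]] by blast
  have hg: "h (g v) = v" for v
  proof (rule transport_labelling_inverse[where g = g and h = h and r = r, OF l1 g(4) h(4)])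
    show "h (g r) = r" using g(1) h(1) by simp
    show "l1 (h (g w)) = l1 w" for w using g(3) h(3) \<tau>(1) by (simp add: bij_is_inj)
  qed
  have gh: "g (h v) = v" for v
  proof (rule transport_labelling_inverse[where g = h and h = g and r = r', OF l2 h(4) g(4)])
    show "g (h r') = r'" using g(1) h(1) by simp
    show "l2 (g (h w)) = l2 w" for w using g(3) h(3) \<tau>(1) by (simp add: bij_is_surj surj_f_inv_f)
  qed
  have "bij g" using hg gh by (metis bij_betw_byWitness subset_UNIV)
  moreover have "E u v \<longleftrightarrow> E (g u) (g v)" for u v using g(4) h(4) hg by metis
  ultimately have "g \<in> Aut E" unfolding Aut_def by blast
  moreover have "g ` VX = VX"
  proof
    show "g ` VX \<subseteq> VX" using g(2) by blast
    show "VX \<subseteq> g ` VX" using g(2) h(2) gh by (metis image_eqI subsetI)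
  qed
  ultimately show ?thesis using that g by blast
qed

lemma mem_U_c_iff:
  "g \<in> U_c E VX VY X Y c M N \<longleftrightarrow>
     g \<in> Aut E \<and> g ` VX = VX \<and> (\<forall>v. local_action E c g v (colours v) \<in> local_group M N v)"
proof -
  have "local_action E c g v (colours v) \<in> local_group M N v \<longleftrightarrow>
      (if v \<in> VX then local_action E c g v X \<in> M else local_action E c g v Y \<in> N)" for v
    unfolding colours_def local_group_def by simp
  then have "(\<forall>v. local_action E c g v (colours v) \<in> local_group M N v) \<longleftrightarrow>
      (\<forall>v\<in>VX. local_action E c g v X \<in> M) \<and> (\<forall>v\<in>VY. local_action E c g v Y \<in> N)"
    unfolding VY_eq by auto
  then show ?thesis unfolding U_c_def by blast
qed

lemma U_c_subset_Aut: "U_c E VX VY X Y c M N \<subseteq> Aut E"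
  unfolding U_c_def by blast

lemma U_c_image_VX: "g \<in> U_c E VX VY X Y c M N \<Longrightarrow> g ` VX = VX"
  unfolding U_c_def by blast

lemma U_c_image_VY:
  assumes "g \<in> U_c E VX VY X Y c M N"
  shows "g ` VY = VY"
proof -
  have "bij g" "g ` VX = VX" using assms AutD(1) unfolding U_c_def by auto
  then show ?thesis unfolding VY_eq by (simp add: bij_image_Compl_eq)
qed

lemma local_action_comp:
  assumes c: "legal_colouring E VX VY X Y c" and g: "g \<in> Aut E" and h: "h \<in> Aut E"
    and h_VX: "h ` VX = VX"
  shows "local_action E c (g \<circ> h) v (colours v) =
    local_action E c g (h v) (colours (h v)) \<circ> local_action E c h v (colours v)"
proof
  fix x
  let ?l = "in_colour c"
  have l: "legal_labelling ?l" using legal_labelling_in_colour[OF c] .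
  show "local_action E c (g \<circ> h) v (colours v) x =
    (local_action E c g (h v) (colours (h v)) \<circ> local_action E c h v (colours v)) x"
  proof (cases "x \<in> colours v")
    case True
    let ?u = "labelled_nbr ?l v x"
    have "E (h v) (h ?u)" using AutD(2)[OF h] labelled_nbr(1)[OF l True] by blast
    then have "local_action E c g (h v) (colours (h v)) (?l (h ?u)) = ?l (g (h ?u))"
      using local_action_apply[OF c g legal_labelling_in_colours[OF l]] labelled_nbr_label[OF l]
      by simp
    then show ?thesis
      using local_action_apply[OF c h True] local_action_apply[OF c Aut_comp[OF g h] True] by simp
  next
    case False
    then show ?thesis using colours_preserved[OF h h_VX]
        local_action_outside[of x "colours v"] local_action_outside[of x "colours (h v)"] by simp
  qed
qed

lemma local_action_id:
  assumes c: "legal_colouring E VX VY X Y c"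
  shows "local_action E c id v (colours v) = id"
proof
  fix x
  show "local_action E c id v (colours v) x = id x"
    using local_action_apply[OF c Aut_id] labelled_nbr(2)[OF legal_labelling_in_colour[OF c]]
      local_action_outside by (cases "x \<in> colours v") simp_all
qed

lemma local_action_inv:
  assumes c: "legal_colouring E VX VY X Y c" and g: "g \<in> Aut E" and g_VX: "g ` VX = VX"
  shows "local_action E c g (inv g v) (colours (inv g v)) \<circ> local_action E c (inv g) v (colours v) = id"
    "local_action E c (inv g) v (colours v) \<circ> local_action E c g (inv g v) (colours (inv g v)) = id"
proof -
  have b: "bij g" using AutD(1)[OF g] .
  have g': "inv g \<in> Aut E" "inv g ` VX = VX" using Aut_inv[OF g] inv_image_VX[OF g g_VX] by auto
  have gg: "g \<circ> inv g = id" using surj_iff bij_is_surj[OF b] by blast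
  have "local_action E c g (inv g v) (colours (inv g v)) \<circ> local_action E c (inv g) v (colours v)
      = local_action E c (g \<circ> inv g) v (colours v)"
    using local_action_comp[OF c g g'] by simp
  also have "\<dots> = id" by (simp only: gg local_action_id[OF c])
  finally show "local_action E c g (inv g v) (colours (inv g v)) \<circ> local_action E c (inv g) v (colours v) = id" .
  have "g (inv g v) = v" using b by (simp add: bij_is_surj surj_f_inv_f)
  have gg': "inv g \<circ> g = id" using inv_o_cancel bij_is_inj[OF b] by blast
  have "local_action E c (inv g) v (colours v) \<circ> local_action E c g (inv g v) (colours (inv g v))
      = local_action E c (inv g \<circ> g) (inv g v) (colours (inv g v))"
    using local_action_comp[OF c g'(1) g g_VX, of "inv g v"] \<open>g (inv g v) = v\<close> by simp
  also have "\<dots> = id" by (simp only: gg' local_action_id[OF c])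
  finally show "local_action E c (inv g) v (colours v) \<circ> local_action E c g (inv g v) (colours (inv g v)) = id" .
qed

lemma local_action_permutes:
  assumes c: "legal_colouring E VX VY X Y c" and g: "g \<in> Aut E" and g_VX: "g ` VX = VX"
  shows "local_action E c g w (colours w) permutes colours w"
proof -
  let ?p = "local_action E c g w (colours w)" and ?q = "local_action E c (inv g) (g w) (colours (g w))"
  have "inv g (g w) = w" using AutD(1)[OF g] by (simp add: bij_is_inj)
  then have pq: "?p \<circ> ?q = id" "?q \<circ> ?p = id" using local_action_inv[OF c g g_VX, of "g w"] by simp_all
  show ?thesis
    unfolding permutes_def
  proof (intro conjI allI impI)
    fix x assume "x \<notin> colours w"
    then show "?p x = x" by (rule local_action_outside)
  next
    fix y
    have "?p (?q y) = y" using pq(1) by (metis comp_apply id_apply)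
    moreover have "x = ?q y" if "?p x = y" for x using pq(2) that by (metis comp_apply id_apply)
    ultimately show "\<exists>!x. ?p x = y" by blast
  qed
qed

lemma perm_group_local_group:
  "perm_group X M \<Longrightarrow> perm_group Y N \<Longrightarrow> perm_group (colours v) (local_group M N v)"
  unfolding colours_def local_group_def by simp

lemma id_mem_U_c:
  assumes c: "legal_colouring E VX VY X Y c" and M: "perm_group X M" and N: "perm_group Y N"
  shows "id \<in> U_c E VX VY X Y c M N"
proof -
  have "local_action E c id v (colours v) \<in> local_group M N v" for v
    using local_action_id[OF c] perm_groupD(1)[OF perm_group_local_group[OF M N]] by simp
  then show ?thesis unfolding mem_U_c_iff using Aut_id by simp
qed

lemma comp_mem_U_c:
  assumes c: "legal_colouring E VX VY X Y c" and M: "perm_group X M" and N: "perm_group Y N"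
    and g: "g \<in> U_c E VX VY X Y c M N" and h: "h \<in> U_c E VX VY X Y c M N"
  shows "g \<circ> h \<in> U_c E VX VY X Y c M N"
proof -
  have g': "g \<in> Aut E" "g ` VX = VX" "\<And>v. local_action E c g v (colours v) \<in> local_group M N v"
    and h': "h \<in> Aut E" "h ` VX = VX" "\<And>v. local_action E c h v (colours v) \<in> local_group M N v"
    using g h unfolding mem_U_c_iff by auto
  have "local_action E c (g \<circ> h) v (colours v) \<in> local_group M N v" for v
  proof -
    have "local_action E c g (h v) (colours (h v)) \<in> local_group M N v"
      using g'(3)[of "h v"] local_group_preserved[OF h'(1,2)] by simp
    then show ?thesis
      using local_action_comp[OF c g'(1) h'(1,2)] perm_groupD(2)[OF perm_group_local_group[OF M N]] h'(3)
      by simp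
  qed
  moreover have "(g \<circ> h) ` VX = VX" using g'(2) h'(2) by (metis image_comp)
  ultimately show ?thesis unfolding mem_U_c_iff using Aut_comp[OF g'(1) h'(1)] by blast
qed

lemma inv_mem_U_c:
  assumes c: "legal_colouring E VX VY X Y c" and M: "perm_group X M" and N: "perm_group Y N"
    and g: "g \<in> U_c E VX VY X Y c M N"
  shows "inv g \<in> U_c E VX VY X Y c M N"
proof -
  have g': "g \<in> Aut E" "g ` VX = VX" "\<And>v. local_action E c g v (colours v) \<in> local_group M N v"
    using g unfolding mem_U_c_iff by auto
  have ig: "inv g \<in> Aut E" "inv g ` VX = VX" using Aut_inv[OF g'(1)] inv_image_VX[OF g'(1,2)] by auto
  have "local_action E c (inv g) v (colours v) \<in> local_group M N v" for v
  proof -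
    let ?p = "local_action E c g (inv g v) (colours (inv g v))"
    have "inv ?p = local_action E c (inv g) v (colours v)"
      using local_action_inv[OF c g'(1,2), of v] by (intro inv_unique_comp) auto
    moreover have "?p \<in> local_group M N v"
      using g'(3)[of "inv g v"] local_group_preserved[OF ig, of M N v] by simp
    ultimately show ?thesis using perm_groupD(3)[OF perm_group_local_group[OF M N]] by metis
  qed
  then show ?thesis unfolding mem_U_c_iff using ig by blast
qed

lemma perm_group_U_c:
  assumes c: "legal_colouring E VX VY X Y c" and M: "perm_group X M" and N: "perm_group Y N"
  shows "perm_group UNIV (U_c E VX VY X Y c M N)"
proof -
  have "U_c E VX VY X Y c M N \<subseteq> Sym UNIV"
  proof
    fix g assume "g \<in> U_c E VX VY X Y c M N"
    then have "bij g" using U_c_subset_Aut AutD(1) by blast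
    then show "g \<in> Sym UNIV" unfolding Sym_def using bij_imp_permutes[of g UNIV] by simp
  qed
  then show ?thesis
    unfolding perm_group_def using id_mem_U_c comp_mem_U_c inv_mem_U_c c M N by blast
qed

text \<open>The automorphism comes from transporting the labelling along \<open>m \<circ> n\<close>, which acts as m on
  X and as n on Y.\<close>
lemma U_c_element_with_local_actions:
  assumes c: "legal_colouring E VX VY X Y c" and M: "perm_group X M" and N: "perm_group Y N"
    and m: "m \<in> M" and n: "n \<in> N" and side: "r \<in> VX \<longleftrightarrow> r' \<in> VX"
    and label: "in_colour c r' = m (n (in_colour c r))"
  obtains g where "g \<in> U_c E VX VY X Y c M N" "g r = r'"
    "\<And>w. local_action E c g w (colours w) = (if w \<in> VX then m else n)"
proof -
  let ?l = "in_colour c"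
  have l: "legal_labelling ?l" using legal_labelling_in_colour[OF c] .
  have mp: "m permutes X" using perm_groupD(4)[OF M m] .
  have np: "n permutes Y" using perm_groupD(4)[OF N n] .
  note mn = permutes_disjoint_comp[OF mp np colours_disjoint]
  have bij_mn: "bij (m \<circ> n)" using bij_comp[OF permutes_bij[OF np] permutes_bij[OF mp]] .
  have "?l r' = (m \<circ> n) (?l r)" using label by simp
  then obtain g where g: "g \<in> Aut E" "g r = r'" "g ` VX = VX" "\<And>v. ?l (g v) = (m \<circ> n) (?l v)"
    using transport_labelling[OF l l bij_mn mn(1,2) side] by blast
  have local: "local_action E c g w (colours w) = (if w \<in> VX then m else n)" for w
  proof
    fix x
    show "local_action E c g w (colours w) x = (if w \<in> VX then m else n) x"
    proof (cases "x \<in> colours w")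
      case True
      then have "local_action E c g w (colours w) x = (m \<circ> n) x"
        using local_action_apply[OF c g(1)] g(4) labelled_nbr(2)[OF l] by simp
      then show ?thesis using True mn(3,4) unfolding colours_def by (auto split: if_splits)
    next
      case False
      then have "local_action E c g w (colours w) x = x" by (rule local_action_outside)
      moreover have "(if w \<in> VX then m else n) x = x"
        using False mp np unfolding colours_def by (simp add: permutes_not_in split: if_splits)
      ultimately show ?thesis by simp
    qed
  qed
  have "g \<in> U_c E VX VY X Y c M N" unfolding mem_U_c_iff local_group_def using g local m n by simp
  then show ?thesis using that g(2) local by blast
qed

lemma orbit_U_c:
  assumes c: "legal_colouring E VX VY X Y c" and M: "perm_group X M" and N: "perm_group Y N"
  shows "orbit (U_c E VX VY X Y c M N) w =
    {v. in_colour c v \<in> orbit (if w \<in> VX then N else M) (in_colour c w)}"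
proof -
  let ?l = "in_colour c" and ?U = "U_c E VX VY X Y c M N" and ?G = "if w \<in> VX then N else M"
  have l: "legal_labelling ?l" using legal_labelling_in_colour[OF c] .
  obtain u where e: "E u w" using ex_adj adj_sym by blast
  have G: "local_group M N u = ?G" using adj_side[OF e] unfolding local_group_def by simp
  have lw: "?l w \<in> colours u" using legal_labelling_in_colours[OF l e] .
  show ?thesis
  proof (intro set_eqI iffI)
    fix v assume "v \<in> orbit ?U w"
    then obtain g where g: "g \<in> ?U" "v = g w" unfolding orbit_def by blast
    then have "g \<in> Aut E" "local_action E c g u (colours u) \<in> ?G"
      unfolding mem_U_c_iff G[symmetric] by auto
    moreover have "?l v = local_action E c g u (colours u) (?l w)"
      using local_action_apply[OF c _ lw] labelled_nbr_label[OF l e] g(2) calculation(1) by simp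
    ultimately have "?l v \<in> orbit ?G (?l w)" unfolding orbit_def by (blast intro: rev_image_eqI)
    then show "v \<in> {v. ?l v \<in> orbit ?G (?l w)}" by simp
  next
    fix v assume "v \<in> {v. ?l v \<in> orbit ?G (?l w)}"
    then obtain f where f: "f \<in> ?G" "?l v = f (?l w)" unfolding orbit_def by auto
    have "f permutes colours u"
      using perm_groupD(4)[OF perm_group_local_group[OF M N, of u]] f(1) G by simp
    then have "?l v \<in> colours u" using f(2) lw by (simp add: permutes_in_image)
    then have side: "w \<in> VX \<longleftrightarrow> v \<in> VX"
      using legal_labelling_side[OF l] lw adj_side[OF e] colours_disjoint unfolding colours_def
      by (auto split: if_splits)
    show "v \<in> orbit ?U w"
    proof (cases "w \<in> VX")
      case True
      then obtain g where "g \<in> ?U" "g w = v"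
        using U_c_element_with_local_actions[OF c M N perm_groupD(1)[OF M], of f w v] side f by auto
      then show ?thesis unfolding orbit_def by blast
    next
      case False
      then obtain g where "g \<in> ?U" "g w = v"
        using U_c_element_with_local_actions[OF c M N _ perm_groupD(1)[OF N], of f w v] side f by auto
      then show ?thesis unfolding orbit_def by blast
    qed
  qed
qed

lemma in_colour_preimage:
  assumes c: "legal_colouring E VX VY X Y c"
  shows "snd ` {a \<in> arcs E. c a \<in> \<Delta>} = {v. in_colour c v \<in> \<Delta>}"
proof (intro set_eqI iffI)
  fix v assume "v \<in> snd ` {a \<in> arcs E. c a \<in> \<Delta>}"
  then obtain u where "E u v" "c (u, v) \<in> \<Delta>" unfolding arcs_def by auto
  then show "v \<in> {v. in_colour c v \<in> \<Delta>}" using in_colour_eq[OF c] by simp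
next
  fix v assume v: "v \<in> {v. in_colour c v \<in> \<Delta>}"
  obtain u where e: "E u v" using ex_adj adj_sym by blast
  then have "(u, v) \<in> {a \<in> arcs E. c a \<in> \<Delta>}" using v in_colour_eq[OF c e] unfolding arcs_def by simp
  then show "v \<in> snd ` {a \<in> arcs E. c a \<in> \<Delta>}" by force
qed

lemma orbit_U_c_iff:
  assumes c: "legal_colouring E VX VY X Y c" and M: "perm_group X M" and N: "perm_group Y N"
    and \<Delta>: "\<Delta> \<subseteq> X \<union> Y"
  shows "(is_orbit X M \<Delta> \<or> is_orbit Y N \<Delta>) \<longleftrightarrow>
    is_orbit UNIV (U_c E VX VY X Y c M N) (snd ` {a \<in> arcs E. c a \<in> \<Delta>})"
proof -
  let ?l = "in_colour c" and ?U = "U_c E VX VY X Y c M N"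
  have l: "legal_labelling ?l" using legal_labelling_in_colour[OF c] .
  have orbit_w: "orbit ?U w = {v. ?l v \<in> \<Delta>}" if "w \<in> VX \<Longrightarrow> \<Delta> = orbit N (?l w)"
    "w \<notin> VX \<Longrightarrow> \<Delta> = orbit M (?l w)" for w
    using orbit_U_c[OF c M N, of w] that by auto
  show ?thesis
    unfolding in_colour_preimage[OF c] is_orbit_def
  proof
    assume "(\<exists>x\<in>X. \<Delta> = orbit M x) \<or> (\<exists>y\<in>Y. \<Delta> = orbit N y)"
    then obtain w where "(w \<notin> VX \<and> \<Delta> = orbit M (?l w)) \<or> (w \<in> VX \<and> \<Delta> = orbit N (?l w))"
      using legal_labelling_surj[OF l] legal_labelling_side[OF l] by blast
    then show "\<exists>w\<in>UNIV. {v. ?l v \<in> \<Delta>} = orbit ?U w" using orbit_w by blast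
  next
    assume "\<exists>w\<in>UNIV. {v. ?l v \<in> \<Delta>} = orbit ?U w"
    then obtain w where w: "{v. ?l v \<in> \<Delta>} = orbit ?U w" by blast
    show "(\<exists>x\<in>X. \<Delta> = orbit M x) \<or> (\<exists>y\<in>Y. \<Delta> = orbit N y)"
    proof (cases "w \<in> VX")
      case True
      then have "?l w \<in> Y" using legal_labelling_side[OF l] by simp
      moreover have "{v. ?l v \<in> orbit N (?l w)} = {v. ?l v \<in> \<Delta>}"
        using w orbit_U_c[OF c M N, of w] True by simp
      ultimately have "orbit N (?l w) = \<Delta>"
        by (intro legal_labelling_preimage_inj[OF l] orbit_subset[OF N, THEN subset_trans] \<Delta>) auto
      then show ?thesis using \<open>?l w \<in> Y\<close> by blast
    next
      case False
      then have "?l w \<in> X" using legal_labelling_side[OF l] by simp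
      moreover have "{v. ?l v \<in> orbit M (?l w)} = {v. ?l v \<in> \<Delta>}"
        using w orbit_U_c[OF c M N, of w] False by simp
      ultimately have "orbit M (?l w) = \<Delta>"
        by (intro legal_labelling_preimage_inj[OF l] orbit_subset[OF M, THEN subset_trans] \<Delta>) auto
      then show ?thesis using \<open>?l w \<in> X\<close> by blast
    qed
  qed
qed

lemma U_c_stabiliser_local_action:
  assumes c: "legal_colouring E VX VY X Y c" and M: "perm_group X M" and N: "perm_group Y N"
    and f: "f \<in> local_group M N v"
  obtains g where "g \<in> U_c E VX VY X Y c M N" "g v = v" "local_action E c g v (colours v) = f"
proof -
  let ?l = "in_colour c"
  have l: "legal_labelling ?l" using legal_labelling_in_colour[OF c] .
  show ?thesis
  proof (cases "v \<in> VX")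
    case True
    then have "f \<in> M" "f permutes X" "?l v \<notin> X"
      using f perm_groupD(4)[OF M] legal_labelling_side(1)[OF l] unfolding local_group_def by auto
    then have "?l v = f (id (?l v))" using permutes_not_in by fastforce
    then obtain g where g: "g \<in> U_c E VX VY X Y c M N" "g v = v"
      "\<And>w. local_action E c g w (colours w) = (if w \<in> VX then f else id)"
      using U_c_element_with_local_actions[OF c M N \<open>f \<in> M\<close> perm_groupD(1)[OF N] refl] by blast
    then show ?thesis using that[OF g(1,2)] g(3)[of v] True by simp
  next
    case False
    then have "f \<in> N" "f permutes Y" "?l v \<notin> Y"
      using f perm_groupD(4)[OF N] legal_labelling_side(2)[OF l] unfolding local_group_def by auto
    then have "?l v = id (f (?l v))" using permutes_not_in by fastforce
    then obtain g where g: "g \<in> U_c E VX VY X Y c M N" "g v = v"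
      "\<And>w. local_action E c g w (colours w) = (if w \<in> VX then id else f)"
      using U_c_element_with_local_actions[OF c M N perm_groupD(1)[OF M] \<open>f \<in> N\<close> refl] by blast
    then show ?thesis using that[OF g(1,2)] g(3)[of v] False by simp
  qed
qed

lemma local_actions_of_stabiliser:
  assumes c: "legal_colouring E VX VY X Y c" and M: "perm_group X M" and N: "perm_group Y N"
  shows "(\<lambda>h. local_action E c h v (colours v)) ` {h \<in> U_c E VX VY X Y c M N. h v = v}
    = local_group M N v"
proof
  show "(\<lambda>h. local_action E c h v (colours v)) ` {h \<in> U_c E VX VY X Y c M N. h v = v}
      \<subseteq> local_group M N v"
    unfolding mem_U_c_iff by blast
  show "local_group M N v
      \<subseteq> (\<lambda>h. local_action E c h v (colours v)) ` {h \<in> U_c E VX VY X Y c M N. h v = v}"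
  proof
    fix f assume "f \<in> local_group M N v"
    then obtain g where "g \<in> U_c E VX VY X Y c M N" "g v = v" "local_action E c g v (colours v) = f"
      by (rule U_c_stabiliser_local_action[OF c M N])
    then show "f \<in> (\<lambda>h. local_action E c h v (colours v)) ` {h \<in> U_c E VX VY X Y c M N. h v = v}"
      by force
  qed
qed

lemma induced_perm_iso_U_c:
  assumes c: "legal_colouring E VX VY X Y c" and M: "perm_group X M" and N: "perm_group Y N"
  shows "induced_perm_iso E (U_c E VX VY X Y c M N) v (colours v) (local_group M N v)"
proof -
  let ?l = "in_colour c" and ?U = "U_c E VX VY X Y c M N"
  have l: "legal_labelling ?l" using legal_labelling_in_colour[OF c] .
  have bij_l: "bij_betw ?l (nbrs E v) (colours v)" using l unfolding legal_labelling_def by blast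
  have the_inv: "the_inv_into (nbrs E v) ?l x = labelled_nbr ?l v x" if "x \<in> colours v" for x
    using labelled_nbr[OF l that] bij_l unfolding nbrs_def bij_betw_def
    by (intro the_inv_into_f_eq) auto
  have "(\<lambda>x. if x \<in> colours v then ?l (h (the_inv_into (nbrs E v) ?l x)) else x)
      = local_action E c h v (colours v)" if h: "h \<in> ?U" for h
  proof
    fix x
    have "h \<in> Aut E" using h U_c_subset_Aut by blast
    then show "(if x \<in> colours v then ?l (h (the_inv_into (nbrs E v) ?l x)) else x)
        = local_action E c h v (colours v) x"
      using the_inv local_action_apply[OF c] local_action_outside[of x "colours v"]
      by (cases "x \<in> colours v") simp_all
  qed
  then have "(\<lambda>h x. if x \<in> colours v then ?l (h (the_inv_into (nbrs E v) ?l x)) else x)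
      ` {h \<in> ?U. h v = v} = (\<lambda>h. local_action E c h v (colours v)) ` {h \<in> ?U. h v = v}"
    by (intro image_cong) auto
  also have "\<dots> = local_group M N v" by (rule local_actions_of_stabiliser[OF c M N])
  finally show ?thesis unfolding induced_perm_iso_def using bij_l by blast
qed

lemma locally_MN_U_c:
  assumes c: "legal_colouring E VX VY X Y c" and M: "perm_group X M" and N: "perm_group Y N"
  shows "locally_MN E VX VY X Y M N (U_c E VX VY X Y c M N)"
proof -
  have "induced_perm_iso E (U_c E VX VY X Y c M N) v X M" if "v \<in> VX" for v
    using induced_perm_iso_U_c[OF c M N, of v] that unfolding colours_def local_group_def by simp
  moreover have "induced_perm_iso E (U_c E VX VY X Y c M N) v Y N" if "v \<in> VY" for v
    using induced_perm_iso_U_c[OF c M N, of v] that unfolding colours_def local_group_def VY_eq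
    by simp
  ultimately have "\<forall>v\<in>VX. induced_perm_iso E (U_c E VX VY X Y c M N) v X M"
    "\<forall>v\<in>VY. induced_perm_iso E (U_c E VX VY X Y c M N) v Y N" by blast+
  then show ?thesis
    unfolding locally_MN_def
    using U_c_subset_Aut perm_group_U_c[OF c M N] U_c_image_VX U_c_image_VY by blast
qed

lemma local_action_conj:
  assumes c1: "legal_colouring E VX VY X Y c1" and c2: "legal_colouring E VX VY X Y c2"
    and g: "g \<in> Aut E" "g ` VX = VX" and label: "\<And>v. in_colour c2 (g v) = in_colour c1 v"
    and h: "h \<in> Aut E"
  shows "local_action E c2 (g \<circ> h \<circ> inv g) v (colours v)
    = local_action E c1 h (inv g v) (colours (inv g v))"
proof
  fix x
  let ?l1 = "in_colour c1" and ?l2 = "in_colour c2"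
  have l1: "legal_labelling ?l1" and l2: "legal_labelling ?l2"
    using legal_labelling_in_colour c1 c2 by blast+
  have g': "inv g \<in> Aut E" "inv g ` VX = VX" using Aut_inv[OF g(1)] inv_image_VX[OF g] by auto
  have same_colours: "colours (inv g v) = colours v" using colours_preserved[OF g'] .
  have g_inv: "g (inv g w) = w" for w using AutD(1)[OF g(1)] by (simp add: bij_is_surj surj_f_inv_f)
  show "local_action E c2 (g \<circ> h \<circ> inv g) v (colours v) x
    = local_action E c1 h (inv g v) (colours (inv g v)) x"
  proof (cases "x \<in> colours v")
    case True
    let ?u = "labelled_nbr ?l2 v x"
    have e: "E (inv g v) (inv g ?u)" using AutD(2)[OF g'(1)] labelled_nbr(1)[OF l2 True] by blast
    have "?l1 (inv g ?u) = x" using label g_inv labelled_nbr(2)[OF l2 True] by metis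
    then have nbr: "labelled_nbr ?l1 (inv g v) x = inv g ?u" using labelled_nbr_label[OF l1 e] by simp
    have "local_action E c2 (g \<circ> h \<circ> inv g) v (colours v) x = ?l2 (g (h (inv g ?u)))"
      using local_action_apply[OF c2 Aut_comp[OF Aut_comp[OF g(1) h] g'(1)] True] by simp
    also have "\<dots> = local_action E c1 h (inv g v) (colours (inv g v)) x"
      using local_action_apply[OF c1 h, of x "inv g v"] True same_colours nbr label by simp
    finally show ?thesis .
  next
    case False
    then show ?thesis using same_colours local_action_outside[of x "colours v"] by simp
  qed
qed

lemma conj_mem_U_c:
  assumes c1: "legal_colouring E VX VY X Y c1" and c2: "legal_colouring E VX VY X Y c2"
    and g: "g \<in> Aut E" "g ` VX = VX" and label: "\<And>v. in_colour c2 (g v) = in_colour c1 v"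
    and h: "h \<in> U_c E VX VY X Y c1 M N"
  shows "g \<circ> h \<circ> inv g \<in> U_c E VX VY X Y c2 M N"
proof -
  have h': "h \<in> Aut E" "h ` VX = VX" "\<And>v. local_action E c1 h v (colours v) \<in> local_group M N v"
    using h unfolding mem_U_c_iff by auto
  have g': "inv g \<in> Aut E" "inv g ` VX = VX" using Aut_inv[OF g(1)] inv_image_VX[OF g] by auto
  have "local_action E c2 (g \<circ> h \<circ> inv g) v (colours v) \<in> local_group M N v" for v
    using local_action_conj[OF c1 c2 g label h'(1)] h'(3)[of "inv g v"] local_group_preserved[OF g']
    by simp
  moreover have "(g \<circ> h \<circ> inv g) ` VX = VX" using g(2) h'(2) g'(2) by (metis image_comp)
  ultimately show ?thesis
    unfolding mem_U_c_iff using Aut_comp[OF Aut_comp[OF g(1) h'(1)] g'(1)] by blast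
qed

lemma U_c_conjugate:
  assumes c1: "legal_colouring E VX VY X Y c1" and c2: "legal_colouring E VX VY X Y c2"
  shows "\<exists>g\<in>Aut E. U_c E VX VY X Y c2 M N = (\<lambda>h. g \<circ> h \<circ> inv g) ` U_c E VX VY X Y c1 M N"
proof -
  let ?l1 = "in_colour c1" and ?l2 = "in_colour c2"
  have l1: "legal_labelling ?l1" and l2: "legal_labelling ?l2"
    using legal_labelling_in_colour c1 c2 by blast+
  obtain r where r: "r \<in> VX" using VX_nonempty by blast
  then have "?l1 r \<in> Y" using legal_labelling_side(2)[OF l1] by simp
  then obtain r' where r': "?l2 r' = ?l1 r" using legal_labelling_surj[OF l2] by blast
  have "r' \<in> VX" using legal_labelling_side(2)[OF l2, of r'] r' \<open>?l1 r \<in> Y\<close> by metis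
  then have side: "r \<in> VX \<longleftrightarrow> r' \<in> VX" using r by simp
  have label: "?l2 r' = id (?l1 r)" using r' by simp
  have idX: "id ` X = X" and idY: "id ` Y = Y" by simp_all
  obtain g where g: "g \<in> Aut E" "g r = r'" "g ` VX = VX" "\<And>v. ?l2 (g v) = id (?l1 v)"
    using transport_labelling[OF l1 l2 bij_id idX idY side label] by blast
  have label_g: "?l2 (g v) = ?l1 v" for v using g(4) by simp
  have b: "bij g" using AutD(1)[OF g(1)] .
  have g': "inv g \<in> Aut E" "inv g ` VX = VX" using Aut_inv[OF g(1)] inv_image_VX[OF g(1,3)] by auto
  have label': "?l1 (inv g v) = ?l2 v" for v
    using label_g[of "inv g v"] b by (simp add: bij_is_surj surj_f_inv_f)
  have "h = g \<circ> (inv g \<circ> h \<circ> inv (inv g)) \<circ> inv g" for h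
    using b by (simp add: inv_inv_eq fun_eq_iff bij_is_surj surj_f_inv_f)
  then have "U_c E VX VY X Y c2 M N \<subseteq> (\<lambda>h. g \<circ> h \<circ> inv g) ` U_c E VX VY X Y c1 M N"
    using conj_mem_U_c[OF c2 c1 g' label'] by blast
  moreover have "(\<lambda>h. g \<circ> h \<circ> inv g) ` U_c E VX VY X Y c1 M N \<subseteq> U_c E VX VY X Y c2 M N"
    using conj_mem_U_c[OF c1 c2 g(1,3) label_g] by blast
  ultimately show ?thesis using g(1) by blast
qed

text \<open>Local actions at v are read off from the values of g on v and its neighbours, so a local
  action outside a closed local group is detected by finitely many vertices.\<close>
lemma local_condition_finitely_witnessed:
  assumes c: "legal_colouring E VX VY X Y c" and f: "f \<in> Aut E" "f ` VX = VX"
    and closed: "closedin (perm_topology (colours v) (Sym (colours v))) (local_group M N v)"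
    and fails: "local_action E c f v (colours v) \<notin> local_group M N v"
  obtains F where "finite F" "{g \<in> Aut E. \<forall>x\<in>F. g x = f x} \<inter> U_c E VX VY X Y c M N = {}"
proof -
  let ?s = "local_action E c f v (colours v)" and ?l = "in_colour c"
  have "?s \<in> Sym (colours v) - local_group M N v"
    using local_action_permutes[OF c f] fails unfolding Sym_def by simp
  with closed have "\<exists>F. finite F \<and> F \<subseteq> colours v \<and>
      {p \<in> Sym (colours v). \<forall>x\<in>F. p x = ?s x} \<inter> local_group M N v = {}"
    unfolding closedin_perm_topology by (elim conjE bspec)
  then obtain F0 where "finite F0 \<and> F0 \<subseteq> colours v \<and>
      {p \<in> Sym (colours v). \<forall>x\<in>F0. p x = ?s x} \<inter> local_group M N v = {}" ..
  then have F0: "finite F0" "F0 \<subseteq> colours v"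
      "{p \<in> Sym (colours v). \<forall>x\<in>F0. p x = ?s x} \<inter> local_group M N v = {}"
    by simp_all
  let ?F = "labelled_nbr ?l v ` F0"
  have "g \<notin> U_c E VX VY X Y c M N" if agree: "\<forall>x\<in>?F. g x = f x" for g
  proof
    assume "g \<in> U_c E VX VY X Y c M N"
    then have g: "g \<in> Aut E" "g ` VX = VX" "local_action E c g v (colours v) \<in> local_group M N v"
      unfolding mem_U_c_iff by auto
    have "local_action E c g v (colours v) \<in> Sym (colours v)"
      using local_action_permutes[OF c g(1,2)] unfolding Sym_def by simp
    moreover have "local_action E c g v (colours v) x = ?s x" if "x \<in> F0" for x
    proof -
      have "x \<in> colours v" using that F0(2) by blast
      moreover have "g (labelled_nbr ?l v x) = f (labelled_nbr ?l v x)" using agree that by blast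
      ultimately show ?thesis
        using local_action_apply[OF c g(1)] local_action_apply[OF c f(1)] by simp
    qed
    ultimately have "local_action E c g v (colours v) \<in>
        {p \<in> Sym (colours v). \<forall>x\<in>F0. p x = ?s x} \<inter> local_group M N v"
      using g(3) by simp
    then show False unfolding F0(3) by simp
  qed
  then have "{g \<in> Aut E. \<forall>x\<in>?F. g x = f x} \<inter> U_c E VX VY X Y c M N = {}" by auto
  moreover have "finite ?F" using F0(1) by simp
  ultimately show ?thesis by (rule that[rotated])
qed

lemma closedin_U_c:
  assumes c: "legal_colouring E VX VY X Y c"
    and M: "closedin (perm_topology X (Sym X)) M" and N: "closedin (perm_topology Y (Sym Y)) N"
  shows "closedin (perm_topology UNIV (Aut E)) (U_c E VX VY X Y c M N)"
  unfolding closedin_perm_topology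
proof (intro conjI ballI)
  let ?U = "U_c E VX VY X Y c M N"
  show "?U \<subseteq> Aut E" by (rule U_c_subset_Aut)
  fix f assume f: "f \<in> Aut E - ?U"
  show "\<exists>F. finite F \<and> F \<subseteq> UNIV \<and> {g \<in> Aut E. \<forall>x\<in>F. g x = f x} \<inter> ?U = {}"
  proof (cases "\<forall>v. f v \<in> VX \<longleftrightarrow> v \<in> VX")
    case False
    then obtain v where "f v \<in> VX \<longleftrightarrow> v \<notin> VX" by blast
    have "g \<notin> ?U" if "g v = f v" for g
    proof
      assume "g \<in> ?U"
      then have "g v \<in> VX \<longleftrightarrow> v \<in> VX"
        using side_preserved[of g v] U_c_subset_Aut U_c_image_VX by blast
      then show False using \<open>f v \<in> VX \<longleftrightarrow> v \<notin> VX\<close> that by simp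
    qed
    then have "{g \<in> Aut E. \<forall>x\<in>{v}. g x = f x} \<inter> ?U = {}" by auto
    then show ?thesis by (intro exI[of _ "{v}"]) simp
  next
    case True
    then have "f -` VX = VX" by auto
    then have "f ` VX = VX" using surj_image_vimage_eq[of f VX] AutD(1) bij_is_surj f by fastforce
    have fA: "f \<in> Aut E" and "f \<notin> ?U" using f by blast+
    then obtain v where "local_action E c f v (colours v) \<notin> local_group M N v"
      using \<open>f ` VX = VX\<close> unfolding mem_U_c_iff by blast
    moreover have "closedin (perm_topology (colours v) (Sym (colours v))) (local_group M N v)"
      using M N unfolding colours_def local_group_def by simp
    ultimately obtain F where "finite F" "{g \<in> Aut E. \<forall>x\<in>F. g x = f x} \<inter> ?U = {}"
      using local_condition_finitely_witnessed[OF c fA \<open>f ` VX = VX\<close>] by blast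
    then show ?thesis by (intro exI[of _ F]) simp
  qed
qed

end

locale locally_MN_group = biregular E VX VY X Y
  for E :: "'v \<Rightarrow> 'v \<Rightarrow> bool" and VX VY :: "'v set" and X Y :: "'c set" +
  fixes M N :: "('c \<Rightarrow> 'c) set" and H :: "('v \<Rightarrow> 'v) set"
  assumes M: "perm_group X M" and N: "perm_group Y N"
    and M_transitive: "transitive_on X M" and N_transitive: "transitive_on Y N"
    and locally_MN: "locally_MN E VX VY X Y M N H"
begin

lemma H_Aut: "g \<in> H \<Longrightarrow> g \<in> Aut E"
  using locally_MN unfolding locally_MN_def by blast

lemma H_image_VX: "g \<in> H \<Longrightarrow> g ` VX = VX"
  using locally_MN unfolding locally_MN_def by blast

lemma H_group: "perm_group UNIV H"
  using locally_MN unfolding locally_MN_def by blast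

lemma H_inv_apply: "g \<in> H \<Longrightarrow> inv g (g v) = v"
  using AutD(1)[OF H_Aut] by (simp add: bij_is_inj)

lemma H_apply_inv: "g \<in> H \<Longrightarrow> g (inv g v) = v"
  using AutD(1)[OF H_Aut] by (simp add: bij_is_surj surj_f_inv_f)

lemma local_group_transitive: "x \<in> colours v \<Longrightarrow> y \<in> colours v \<Longrightarrow> \<exists>f\<in>local_group M N v. f x = y"
  using M_transitive N_transitive unfolding transitive_on_def colours_def local_group_def
  by (auto split: if_splits)

lemma local_group_permutes: "f \<in> local_group M N v \<Longrightarrow> f permutes colours v"
  using perm_groupD(4)[OF perm_group_local_group[OF M N]] .

definition induced_perm :: "('v \<Rightarrow> 'c) \<Rightarrow> ('v \<Rightarrow> 'v) \<Rightarrow> 'v \<Rightarrow> 'c \<Rightarrow> 'c" where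
  "induced_perm \<phi> h v = (\<lambda>x. if x \<in> colours v then \<phi> (h (the_inv_into (nbrs E v) \<phi> x)) else x)"

definition nbr_iso :: "'v \<Rightarrow> 'v \<Rightarrow> 'c" where
  "nbr_iso v = (SOME \<phi>. bij_betw \<phi> (nbrs E v) (colours v)
     \<and> (\<lambda>h. induced_perm \<phi> h v) ` {h \<in> H. h v = v} = local_group M N v)"

lemma nbr_iso:
  "bij_betw (nbr_iso v) (nbrs E v) (colours v)"
  "(\<lambda>h. induced_perm (nbr_iso v) h v) ` {h \<in> H. h v = v} = local_group M N v"
proof -
  have "induced_perm_iso E H v (colours v) (local_group M N v)"
    using locally_MN unfolding locally_MN_def colours_def local_group_def VY_eq
    by (cases "v \<in> VX") auto
  then have "\<exists>\<phi>. bij_betw \<phi> (nbrs E v) (colours v)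
      \<and> (\<lambda>h. induced_perm \<phi> h v) ` {h \<in> H. h v = v} = local_group M N v"
    unfolding induced_perm_iso_def induced_perm_def by blast
  from someI_ex[OF this] show
    "bij_betw (nbr_iso v) (nbrs E v) (colours v)"
    "(\<lambda>h. induced_perm (nbr_iso v) h v) ` {h \<in> H. h v = v} = local_group M N v"
    unfolding nbr_iso_def by auto
qed

lemma induced_perm_mem_local_group:
  "k \<in> H \<Longrightarrow> k w = w \<Longrightarrow> induced_perm (nbr_iso w) k w \<in> local_group M N w"
  using nbr_iso(2)[of w] by blast

definition orbit_rep :: "'v \<Rightarrow> 'v" where
  "orbit_rep v = (SOME w. w \<in> orbit H v)"

definition from_rep :: "'v \<Rightarrow> 'v \<Rightarrow> 'v" where
  "from_rep v = (SOME h. h \<in> H \<and> h (orbit_rep v) = v)"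

lemma orbit_rep_eq: "g \<in> H \<Longrightarrow> orbit_rep (g v) = orbit_rep v"
  unfolding orbit_rep_def using orbit_eq[OF H_group] by simp

lemma from_rep: "from_rep v \<in> H" "from_rep v (orbit_rep v) = v"
proof -
  have "orbit_rep v \<in> orbit H v" unfolding orbit_rep_def using orbit_self[OF H_group] by (rule someI)
  then obtain k where "k \<in> H" "orbit_rep v = k v" unfolding orbit_def by blast
  then have "\<exists>h. h \<in> H \<and> h (orbit_rep v) = v"
    using perm_groupD(3)[OF H_group] H_inv_apply by metis
  from someI_ex[OF this] show "from_rep v \<in> H" "from_rep v (orbit_rep v) = v"
    unfolding from_rep_def by auto
qed

lemma inv_from_rep: "inv (from_rep v) v = orbit_rep v"
  using H_inv_apply[OF from_rep(1), of v "orbit_rep v"] from_rep(2) by simp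

lemma orbit_rep_side: "orbit_rep v \<in> VX \<longleftrightarrow> v \<in> VX"
proof -
  have "from_rep v (orbit_rep v) \<in> VX \<longleftrightarrow> orbit_rep v \<in> VX"
    using side_preserved[OF H_Aut[OF from_rep(1)] H_image_VX[OF from_rep(1)]] .
  then show ?thesis using from_rep(2) by simp
qed

lemma colours_orbit_rep: "colours (orbit_rep v) = colours v"
  using orbit_rep_side unfolding colours_def by simp

lemma local_group_orbit_rep: "local_group M N (orbit_rep v) = local_group M N v"
  using orbit_rep_side unfolding local_group_def by simp

text \<open>Coordinates on B(v), pulled back from the orbit representative. They are H-equivariant up to
  the local group: g \<in> H acts on coordinates by the permutation induced by an element of the
  stabiliser of the representative.\<close>
definition nbr_coord :: "'v \<Rightarrow> 'v \<Rightarrow> 'c" where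
  "nbr_coord v u = nbr_iso (orbit_rep v) (inv (from_rep v) u)"

definition rep_stabiliser :: "('v \<Rightarrow> 'v) \<Rightarrow> 'v \<Rightarrow> 'v \<Rightarrow> 'v" where
  "rep_stabiliser g v = inv (from_rep (g v)) \<circ> g \<circ> from_rep v"

lemma nbr_coord_bij: "bij_betw (nbr_coord v) (nbrs E v) (colours v)"
proof -
  have "bij_betw (inv (from_rep v)) (nbrs E v) (nbrs E (orbit_rep v))"
    using Aut_nbrs[OF H_Aut[OF perm_groupD(3)[OF H_group from_rep(1)[of v]]], where w = v] inv_from_rep
    by simp
  then have "bij_betw (nbr_iso (orbit_rep v) \<circ> inv (from_rep v)) (nbrs E v) (colours v)"
    using bij_betw_trans[OF _ nbr_iso(1)] colours_orbit_rep by metis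
  then show ?thesis unfolding nbr_coord_def comp_def by simp
qed

lemma rep_stabiliser:
  assumes g: "g \<in> H"
  shows "rep_stabiliser g v \<in> H" "rep_stabiliser g v (orbit_rep v) = orbit_rep v"
proof -
  show "rep_stabiliser g v \<in> H"
    unfolding rep_stabiliser_def using perm_groupD(2,3)[OF H_group] from_rep(1) g by metis
  have "rep_stabiliser g v (orbit_rep v) = inv (from_rep (g v)) (g v)"
    unfolding rep_stabiliser_def using from_rep(2)[of v] by simp
  also have "\<dots> = orbit_rep v" using inv_from_rep[of "g v"] orbit_rep_eq[OF g] by simp
  finally show "rep_stabiliser g v (orbit_rep v) = orbit_rep v" .
qed

lemma nbr_coord_equivariant:
  assumes g: "g \<in> H" and u: "E v u"
  shows "nbr_coord (g v) (g u) = induced_perm (nbr_iso (orbit_rep v)) (rep_stabiliser g v) (orbit_rep v)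
    (nbr_coord v u)"
proof -
  let ?w = "orbit_rep v" and ?u' = "inv (from_rep v) u"
  have "E (inv (from_rep v) v) ?u'"
    using AutD(2)[OF H_Aut[OF perm_groupD(3)[OF H_group from_rep(1)]]] u by blast
  then have u': "?u' \<in> nbrs E ?w" using inv_from_rep unfolding nbrs_def by simp
  then have "nbr_coord v u \<in> colours ?w"
    unfolding nbr_coord_def using nbr_iso(1)[of ?w] bij_betwE by blast
  moreover have "the_inv_into (nbrs E ?w) (nbr_iso ?w) (nbr_coord v u) = ?u'"
    unfolding nbr_coord_def using nbr_iso(1)[of ?w] u' bij_betw_imp_inj_on the_inv_into_f_f by metis
  moreover have "rep_stabiliser g v ?u' = inv (from_rep (g v)) (g u)"
    unfolding rep_stabiliser_def using H_apply_inv[OF from_rep(1)] by simp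
  ultimately show ?thesis
    unfolding induced_perm_def nbr_coord_def using orbit_rep_eq[OF g] by simp
qed

definition root :: 'v where "root = (SOME v. v \<in> VX)"
definition root_label :: 'c where "root_label = (SOME y. y \<in> Y)"

lemma root_in_VX: "root \<in> VX" unfolding root_def using VX_nonempty by (rule someI_ex)
lemma root_label_in_Y: "root_label \<in> Y" unfolding root_label_def using Y_nonempty by (simp add: some_in_eq)

text \<open>Labels and frames f_v \<in> local_group v are constructed outward from the root: the label of v
  is read off at its parent, and f_v is then chosen (by transitivity) so that f_v \<circ> nbr_coord v
  gives the parent its label. By induction f_v \<circ> nbr_coord v is the labelling on all of B(v).\<close>
definition label_frame :: "'v \<Rightarrow> 'c \<times> ('c \<Rightarrow> 'c)" where
  "label_frame = tree_rec root (root_label, id) (\<lambda>v (l, f).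
     (f (nbr_coord (parent root v) v),
      SOME f'. f' \<in> local_group M N v \<and> f' (nbr_coord v (parent root v)) = l))"

definition label :: "'v \<Rightarrow> 'c" where "label v = fst (label_frame v)"
definition frame :: "'v \<Rightarrow> 'c \<Rightarrow> 'c" where "frame v = snd (label_frame v)"

lemma label_frame_root: "label root = root_label" "frame root = id"
  unfolding label_def frame_def label_frame_def tree_rec_root by simp_all

lemma label_frame_step:
  assumes "v \<noteq> root"
  shows "label v = frame (parent root v) (nbr_coord (parent root v) v)"
    "frame v = (SOME f. f \<in> local_group M N v \<and> f (nbr_coord v (parent root v)) = label (parent root v))"
  unfolding label_def frame_def label_frame_def tree_rec_step[OF assms] by (simp_all split: prod.split)

lemma label_frame_invariant:
  "label v \<in> (if v \<in> VX then Y else X) \<and> frame v \<in> local_group M N v \<and>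
     (v \<noteq> root \<longrightarrow> frame v (nbr_coord v (parent root v)) = label (parent root v))"
proof (induction v rule: tree_induct[of _ root])
  case root
  have "frame root \<in> local_group M N root"
    unfolding label_frame_root(2) by (rule perm_groupD(1)[OF perm_group_local_group[OF M N]])
  then show ?case using label_frame_root(1) root_in_VX root_label_in_Y by simp
next
  case (step v)
  let ?p = "parent root v"
  have e: "E ?p v" using parent_adj[OF step(1)] .
  have "nbr_coord ?p v \<in> colours ?p" using nbr_coord_bij e unfolding nbrs_def by (blast dest: bij_betwE)
  then have "label v \<in> colours ?p"
    using label_frame_step(1)[OF step(1)] local_group_permutes step(2) by (simp add: permutes_in_image)
  then have label_v: "label v \<in> (if v \<in> VX then Y else X)"
    using adj_side[OF e] unfolding colours_def by (auto split: if_splits)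
  have "nbr_coord v ?p \<in> colours v" using nbr_coord_bij adj_sym[OF e] unfolding nbrs_def
    by (blast dest: bij_betwE)
  moreover have "label ?p \<in> colours v" using step(2) adj_side[OF e] unfolding colours_def
    by (auto split: if_splits)
  ultimately have "\<exists>f. f \<in> local_group M N v \<and> f (nbr_coord v ?p) = label ?p"
    using local_group_transitive by blast
  then have "frame v \<in> local_group M N v \<and> frame v (nbr_coord v ?p) = label ?p"
    unfolding label_frame_step(2)[OF step(1)] by (rule someI_ex)
  then show ?case using label_v by blast
qed

lemma label_adj: "E v u \<Longrightarrow> label u = frame v (nbr_coord v u)"
  using adj_parent_cases[of v u root] label_frame_step(1) label_frame_invariant by metis

lemma legal_labelling_label: "legal_labelling label"
  unfolding legal_labelling_def
proof
  fix v
  have "bij_betw (frame v) (colours v) (colours v)"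
    using label_frame_invariant local_group_permutes permutes_imp_bij by blast
  then have "bij_betw (frame v \<circ> nbr_coord v) (nbrs E v) (colours v)"
    using bij_betw_trans[OF nbr_coord_bij] by blast
  moreover have "\<forall>u\<in>nbrs E v. (frame v \<circ> nbr_coord v) u = label u" using label_adj unfolding nbrs_def by simp
  ultimately show "bij_betw label (nbrs E v) (colours v)"
    using bij_betw_cong[of "nbrs E v" "frame v \<circ> nbr_coord v" label] by simp
qed

abbreviation colouring :: "'v \<times> 'v \<Rightarrow> 'c" where
  "colouring \<equiv> \<lambda>a. label (snd a)"

lemma legal_colouring: "legal_colouring E VX VY X Y colouring"
  using legal_colouring_of_labelling[OF legal_labelling_label] .

lemma local_action_colouring:
  assumes g: "g \<in> H"
  shows "local_action E colouring g v (colours v) = frame (g v) \<circ>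
    induced_perm (nbr_iso (orbit_rep v)) (rep_stabiliser g v) (orbit_rep v) \<circ> inv (frame v)"
proof
  fix x
  let ?\<kappa> = "induced_perm (nbr_iso (orbit_rep v)) (rep_stabiliser g v) (orbit_rep v)"
  have a: "frame v permutes colours v" and b: "frame (g v) permutes colours v"
    using label_frame_invariant local_group_permutes
      colours_preserved[OF H_Aut[OF g] H_image_VX[OF g]] by metis+
  show "local_action E colouring g v (colours v) x = (frame (g v) \<circ> ?\<kappa> \<circ> inv (frame v)) x"
  proof (cases "x \<in> colours v")
    case True
    let ?u = "labelled_nbr label v x"
    have e: "E v ?u" and "label ?u = x" using labelled_nbr[OF legal_labelling_label True] by auto
    then have x: "inv (frame v) x = nbr_coord v ?u"
      using label_adj[OF e] permutes_inverses(2)[OF a] by metis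
    have "E (g v) (g ?u)" using AutD(2)[OF H_Aut[OF g]] e by blast
    have "local_action E colouring g v (colours v) x = label (g ?u)"
      using local_action_apply[OF legal_colouring H_Aut[OF g] True]
      unfolding in_colour_of_labelling .
    also have "\<dots> = frame (g v) (nbr_coord (g v) (g ?u))" using label_adj[OF \<open>E (g v) (g ?u)\<close>] .
    also have "\<dots> = frame (g v) (?\<kappa> (inv (frame v) x))"
      unfolding x nbr_coord_equivariant[OF g e] ..
    finally show ?thesis by simp
  next
    case False
    have "x \<notin> colours (orbit_rep v)" using False colours_orbit_rep by simp
    then have "?\<kappa> x = x" unfolding induced_perm_def by simp
    moreover have "inv (frame v) x = x" using permutes_not_in[OF permutes_inv[OF a] False] .
    moreover have "frame (g v) x = x" using permutes_not_in[OF b False] .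
    ultimately show ?thesis using local_action_outside[OF False] by simp
  qed
qed

lemma H_subset_U_c: "H \<subseteq> U_c E VX VY X Y colouring M N"
proof
  fix g assume g: "g \<in> H"
  note group = perm_groupD[OF perm_group_local_group[OF M N]]
  have "local_action E colouring g v (colours v) \<in> local_group M N v" for v
  proof -
    have "frame v \<in> local_group M N v" "frame (g v) \<in> local_group M N v"
      using label_frame_invariant local_group_preserved[OF H_Aut[OF g] H_image_VX[OF g]] by metis+
    moreover have "induced_perm (nbr_iso (orbit_rep v)) (rep_stabiliser g v) (orbit_rep v)
        \<in> local_group M N v"
      using induced_perm_mem_local_group rep_stabiliser[OF g] local_group_orbit_rep by metis
    ultimately show ?thesis unfolding local_action_colouring[OF g] using group(2,3) by metis
  qed
  then show "g \<in> U_c E VX VY X Y colouring M N"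
    unfolding mem_U_c_iff using H_Aut[OF g] H_image_VX[OF g] by blast
qed

end

lemma (in biregular) locally_MN_subset_U_c:
  assumes "perm_group X M" "perm_group Y N" "transitive_on X M" "transitive_on Y N"
    and "locally_MN E VX VY X Y M N H"
  shows "\<exists>c. legal_colouring E VX VY X Y c \<and> H \<subseteq> U_c E VX VY X Y c M N"
proof -
  interpret locally_MN_group E VX VY X Y M N H using assms by unfold_locales
  show ?thesis using legal_colouring H_subset_U_c by blast
qed

theorem theorem3p2:
  fixes E :: "'v \<Rightarrow> 'v \<Rightarrow> bool" and VX VY :: "'v set"
    and X Y :: "'c set" and M N :: "('c \<Rightarrow> 'c) set" and c :: "'v \<times> 'v \<Rightarrow> 'c"
  assumes disj: "X \<inter> Y = {}"
    and X2: "\<exists>x1\<in>X. \<exists>x2\<in>X. x1 \<noteq> x2"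
    and Y2: "\<exists>y1\<in>Y. \<exists>y2\<in>Y. y1 \<noteq> y2"
    and T: "biregular_tree E VX VY X Y"
    and M: "perm_group X M"
    and N: "perm_group Y N"
    and c: "legal_colouring E VX VY X Y c"
  shows "(\<forall>\<Delta>. \<Delta> \<subseteq> X \<union> Y \<longrightarrow>
           ((is_orbit X M \<Delta> \<or> is_orbit Y N \<Delta>) \<longleftrightarrow>
            is_orbit UNIV (U_c E VX VY X Y c M N) (snd ` {a \<in> arcs E. c a \<in> \<Delta>})))
    \<and> (\<forall>c1 c2. legal_colouring E VX VY X Y c1 \<and> legal_colouring E VX VY X Y c2 \<longrightarrow>
           (\<exists>g\<in>Aut E. U_c E VX VY X Y c2 M N = (\<lambda>h. g \<circ> h \<circ> inv g) ` U_c E VX VY X Y c1 M N))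
    \<and> (transitive_on X M \<and> transitive_on Y N \<longrightarrow>
           (\<forall>H. locally_MN E VX VY X Y M N H \<longrightarrow>
              (\<exists>c''. legal_colouring E VX VY X Y c'' \<and> H \<subseteq> U_c E VX VY X Y c'' M N)))
    \<and> locally_MN E VX VY X Y M N (U_c E VX VY X Y c M N)
    \<and> (closedin (perm_topology X (Sym X)) M \<and> closedin (perm_topology Y (Sym Y)) N \<longrightarrow>
           U_c E VX VY X Y c M N \<subseteq> Aut E \<and> perm_group UNIV (U_c E VX VY X Y c M N)
           \<and> closedin (perm_topology UNIV (Aut E)) (U_c E VX VY X Y c M N))"
proof -
  interpret biregular E VX VY X Y
    by unfold_locales (use T disj X2 Y2 in blast)+
  show ?thesis
    by (intro conjI allI impI; (elim conjE)?;
        rule orbit_U_c_iff[OF c M N] U_c_conjugate locally_MN_subset_U_c[OF M N]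
          locally_MN_U_c[OF c M N] U_c_subset_Aut perm_group_U_c[OF c M N] closedin_U_c[OF c])
qed

end
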